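(* Let $\mathbf{A}$, $\mathbf{B}$ be $\sigma$-structures. The following are equivalent: (1) there exist matrices $P\in\mathbb{R}^{B\times A}$ and $Q\in\mathbb{R}^{\mathcal{C}_\mathbf{B}\times\mathcal{C}_\mathbf{A}}$, both doubly stochastic, such that for every $\ell\in\mathcal{L}_\sigma$ it holds that $P M^{\ell}_{\mathbf{A}}=M^{\ell}_{\mathbf{B}}Q$ and $M^{\ell}_{\mathbf{A}}Q^T=P^T M^{\ell}_{\mathbf{B}}$; (2) $\mathbf{A}$ and $\mathbf{B}$ have the same iterated degree sequence; (3) $\mathbf{A}$ and $\mathbf{B}$ have a common equitable partition. If, additionally, $\mathbf{A}$ and $\mathbf{B}$ are graphs, then the following is also equivalent to (1)–(3): (4) there exists a doubly stochastic matrix $P\in\mathbb{R}^{B\times A}$ such that $P N_{\mathbf{A}}=N_{\mathbf{B}}P$, where $N_\mathbf{A}$, $N_\mathbf{B}$ are the adjacency matrices of $\mathbf{A}$, $\mathbf{B}$.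
   Context: A signature $\sigma$ is a finite set of relation symbols $R$, each with an arity $\operatorname{ar}(R)\ge 1$. A $\sigma$-structure $\mathbf{A}$ consists of a finite universe $A$ and, for each $R\in\sigma$, a non-empty relation $R^{\mathbf{A}}\subseteq A^{\operatorname{ar}(R)}$. For a tuple $\mathbf{a}$, $a_i$ denotes its $i$-th entry and $\{\mathbf{a}\}$ the set of its entries. The constraint set of $\mathbf{A}$ is $\mathcal{C}_\mathbf{A}=\{R(\mathbf{a}) : R\in\sigma,\ \mathbf{a}\in R^{\mathbf{A}}\}$, where $R(\mathbf{a})$ are formal symbols. Let $\mathcal{L}_\sigma=\{(S,R): R\in\sigma,\ S\subseteq[\operatorname{ar}(R)]\}$. The factor graph of $\mathbf{A}$ is the bipartite graph with vertex set $A\cup\mathcal{C}_\mathbf{A}$ (disjoint union) and edges $\{a,R(\mathbf{a})\}$ whenever $a\in\{\mathbf{a}\}$; such an edge has label $(S,R)$ with $S=\{i: a_i=a\}$. Iterated degrees: $\delta^{\mathbf{A}}_0(v)$ is one of two fixed symbols according to whether $v\in A$ or $v\in\mathcal{C}_\mathbf{A}$; for $j\ge1$, $\delta^{\mathbf{A}}_j(v)$ is the multiset $\{\{(\ell_{\{v,w\}},\delta^{\mathbf{A}}_{j-1}(w)) : w \text{ adjacent to } v\}\}$ where $\ell_{\{v,w\}}$ is the edge label; $\delta^{\mathbf{A}}(v)=(\delta^{\mathbf{A}}_0(v),\delta^{\mathbf{A}}_1(v),\dots)$. The iterated degree sequence of $\mathbf{A}$ is the multiset $\{\{\delta^{\mathbf{A}}(v):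 v\in A\cup\mathcal{C}_\mathbf{A}\}\}$. The matrix $M_\mathbf{A}\in\mathcal{L}_\sigma^{A\times\mathcal{C}_\mathbf{A}}$ has $M_\mathbf{A}[a,R(\mathbf{a})]=(S,R)$ with $S=\{i\in[\operatorname{ar}(R)]: a_i=a\}$ (possibly $S=\emptyset$); for $\ell\in\mathcal{L}_\sigma$, $M^\ell_\mathbf{A}\in\{0,1\}^{A\times\mathcal{C}_\mathbf{A}}$ has entry $1$ exactly where $M_\mathbf{A}$ equals $\ell$. A doubly stochastic matrix is a non-negative matrix all of whose row sums and column sums equal $1$ (in particular its row and column index sets have the same size). A partition of $\mathbf{A}$ is a pair $(\{\mathcal{P}_i\}_{i\in I},\{\mathcal{Q}_j\}_{j\in J})$ of a partition of $A$ and a partition of $\mathcal{C}_\mathbf{A}$. It is equitable if there are integers $c^\ell_{i,j},d^\ell_{j,i}$ (the parameters) such that for all $i,j,\ell$: every $a\in\mathcal{P}_i$ satisfies $|\{R(\mathbf{a})\in\mathcal{Q}_j: M_\mathbf{A}[a,R(\mathbf{a})]=\ell\}|=c^\ell_{i,j}$, and every $R(\mathbf{a})\in\mathcal{Q}_j$ satisfies $|\{a\in\mathcal{P}_i: M_\mathbf{A}[a,R(\mathbf{a})]=\ell\}|=d^\ell_{j,i}$. Two structures $\mathbf{A},\mathbf{B}$ have a common equitable partition if they have equitable partitions $(\{\mathcal{P}^\mathbf{A}_i\}_{i\in I},\{\mathcal{Q}^\mathbf{A}_j\}_{j\in J})$, $(\{\mathcal{P}^\mathbf{B}_i\}_{i\in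 I},\{\mathcal{Q}^\mathbf{B}_j\}_{j\in J})$ with the same parameters and $|\mathcal{P}^\mathbf{A}_i|=|\mathcal{P}^\mathbf{B}_i|$, $|\mathcal{Q}^\mathbf{A}_j|=|\mathcal{Q}^\mathbf{B}_j|$ for all $i,j$. A graph is a structure whose signature consists of one binary relation symbol interpreted as a symmetric irreflexive relation. *)

theory Defs
  imports Complex_Main "HOL-Library.Multiset"
begin

(* A signature is given by a set sig :: 'r set of relation symbols and an arity
   function ar :: 'r => nat.  Tuples are lists; positions are 0-based,
   i.e. [ar R] is rendered as {..<ar R}. *)

record ('r, 'a) struc =
  univ :: "'a set"
  rels :: "'r \<Rightarrow> 'a list set"

definition is_signature :: "'r set \<Rightarrow> ('r \<Rightarrow> nat) \<Rightarrow> bool" where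
  "is_signature sig ar \<longleftrightarrow> finite sig \<and> (\<forall>R\<in>sig. ar R \<ge> 1)"

definition is_structure :: "'r set \<Rightarrow> ('r \<Rightarrow> nat) \<Rightarrow> ('r, 'a) struc \<Rightarrow> bool" where
  "is_structure sig ar S \<longleftrightarrow> is_signature sig ar \<and> finite (univ S) \<and>
     (\<forall>R\<in>sig. rels S R \<noteq> {} \<and>
        rels S R \<subseteq> {t. length t = ar R \<and> set t \<subseteq> univ S})"

type_synonym ('r, 'a) constr = "'r \<times> 'a list"
type_synonym 'r label = "nat set \<times> 'r"

text \<open>Constraint set C_S: formal symbols R(t) are pairs (R, t).\<close>
definition constraints :: "'r set \<Rightarrow> ('r, 'a) struc \<Rightarrow> ('r, 'a) constr set" where
  "constraints sig S = {(R, t). R \<in> sig \<and> t \<in> rels S R}"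

definition labels :: "'r set \<Rightarrow> ('r \<Rightarrow> nat) \<Rightarrow> 'r label set" where
  "labels sig ar = {(X, R). R \<in> sig \<and> X \<subseteq> {..<ar R}}"

text \<open>Entry M_S[a, R(t)] = (S, R) with S the set of positions of a in t.\<close>
definition Mlab :: "'a \<Rightarrow> ('r, 'a) constr \<Rightarrow> 'r label" where
  "Mlab a c = ({i. i < length (snd c) \<and> snd c ! i = a}, fst c)"

definition Mell :: "'r label \<Rightarrow> 'a \<Rightarrow> ('r, 'a) constr \<Rightarrow> real" where
  "Mell l a c = (if Mlab a c = l then 1 else 0)"

definition doubly_stochastic :: "'x set \<Rightarrow> 'y set \<Rightarrow> ('x \<Rightarrow> 'y \<Rightarrow> real) \<Rightarrow> bool" where
  "doubly_stochastic Rows Cols P \<longleftrightarrow>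
     (\<forall>r\<in>Rows. \<forall>c\<in>Cols. P r c \<ge> 0) \<and>
     (\<forall>r\<in>Rows. (\<Sum>c\<in>Cols. P r c) = 1) \<and>
     (\<forall>c\<in>Cols. (\<Sum>r\<in>Rows. P r c) = 1)"

definition frac_iso :: "'r set \<Rightarrow> ('r \<Rightarrow> nat) \<Rightarrow> ('r, 'a) struc \<Rightarrow> ('r, 'b) struc \<Rightarrow> bool" where
  "frac_iso sig ar A B \<longleftrightarrow>
    (\<exists>(P :: 'b \<Rightarrow> 'a \<Rightarrow> real) (Q :: ('r, 'b) constr \<Rightarrow> ('r, 'a) constr \<Rightarrow> real).
       doubly_stochastic (univ B) (univ A) P \<and>
       doubly_stochastic (constraints sig B) (constraints sig A) Q \<and>
       (\<forall>l\<in>labels sig ar.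
          (\<forall>b\<in>univ B. \<forall>c\<in>constraints sig A.
             (\<Sum>a\<in>univ A. P b a * Mell l a c) =
             (\<Sum>d\<in>constraints sig B. Mell l b d * Q d c)) \<and>
          (\<forall>a\<in>univ A. \<forall>d\<in>constraints sig B.
             (\<Sum>c\<in>constraints sig A. Mell l a c * Q d c) =
             (\<Sum>b\<in>univ B. P b a * Mell l b d))))"

text \<open>Iterated degrees on the factor graph with vertex set A + C_A.\<close>
datatype 'r deg = DElem | DConstr | DMulti "('r label \<times> 'r deg) multiset"

fun ideg :: "'r set \<Rightarrow> ('r, 'a) struc \<Rightarrow> nat \<Rightarrow> ('a + ('r, 'a) constr) \<Rightarrow> 'r deg" where
  "ideg sig S 0 (Inl a) = DElem"
| "ideg sig S 0 (Inr c) = DConstr"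
| "ideg sig S (Suc j) (Inl a) =
     DMulti (image_mset (\<lambda>c. (Mlab a c, ideg sig S j (Inr c)))
       (mset_set {c \<in> constraints sig S. a \<in> set (snd c)}))"
| "ideg sig S (Suc j) (Inr c) =
     DMulti (image_mset (\<lambda>a. (Mlab a c, ideg sig S j (Inl a)))
       (mset_set (set (snd c))))"

definition fg_vertices :: "'r set \<Rightarrow> ('r, 'a) struc \<Rightarrow> ('a + ('r, 'a) constr) set" where
  "fg_vertices sig S = Inl ` univ S \<union> Inr ` constraints sig S"

definition iterated_degree_sequence :: "'r set \<Rightarrow> ('r, 'a) struc \<Rightarrow> (nat \<Rightarrow> 'r deg) multiset" where
  "iterated_degree_sequence sig S =
     image_mset (\<lambda>v j. ideg sig S j v) (mset_set (fg_vertices sig S))"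

definition indexed_partition :: "'i set \<Rightarrow> ('i \<Rightarrow> 'x set) \<Rightarrow> 'x set \<Rightarrow> bool" where
  "indexed_partition I P X \<longleftrightarrow>
     (\<forall>i\<in>I. P i \<noteq> {}) \<and> (\<forall>i\<in>I. \<forall>j\<in>I. i \<noteq> j \<longrightarrow> P i \<inter> P j = {}) \<and>
     (\<Union>i\<in>I. P i) = X"

definition equitable_with ::
  "'r set \<Rightarrow> ('r \<Rightarrow> nat) \<Rightarrow> ('r, 'a) struc \<Rightarrow> nat set \<Rightarrow> nat set \<Rightarrow>
   (nat \<Rightarrow> 'a set) \<Rightarrow> (nat \<Rightarrow> ('r, 'a) constr set) \<Rightarrow>
   ('r label \<Rightarrow> nat \<Rightarrow> nat \<Rightarrow> nat) \<Rightarrow> ('r label \<Rightarrow> nat \<Rightarrow> nat \<Rightarrow> nat) \<Rightarrow> bool" where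
  "equitable_with sig ar S I J P Q c d \<longleftrightarrow>
     indexed_partition I P (univ S) \<and> indexed_partition J Q (constraints sig S) \<and>
     (\<forall>i\<in>I. \<forall>j\<in>J. \<forall>l\<in>labels sig ar.
        (\<forall>a\<in>P i. card {x \<in> Q j. Mlab a x = l} = c l i j) \<and>
        (\<forall>x\<in>Q j. card {a \<in> P i. Mlab a x = l} = d l j i))"

definition common_equitable_partition ::
  "'r set \<Rightarrow> ('r \<Rightarrow> nat) \<Rightarrow> ('r, 'a) struc \<Rightarrow> ('r, 'b) struc \<Rightarrow> bool" where
  "common_equitable_partition sig ar A B \<longleftrightarrow>
     (\<exists>I J PA QA PB QB c d.
        equitable_with sig ar A I J PA QA c d \<and>
        equitable_with sig ar B I J PB QB c d \<and>
        (\<forall>i\<in>I. card (PA i) = card (PB i)) \<and>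
        (\<forall>j\<in>J. card (QA j) = card (QB j)))"

definition is_graph :: "'r set \<Rightarrow> ('r \<Rightarrow> nat) \<Rightarrow> 'r \<Rightarrow> ('r, 'a) struc \<Rightarrow> bool" where
  "is_graph sig ar E S \<longleftrightarrow> sig = {E} \<and> ar E = 2 \<and>
     (\<forall>x y. [x, y] \<in> rels S E \<longrightarrow> [y, x] \<in> rels S E) \<and>
     (\<forall>x. [x, x] \<notin> rels S E)"

definition adj :: "'r \<Rightarrow> ('r, 'a) struc \<Rightarrow> 'a \<Rightarrow> 'a \<Rightarrow> real" where
  "adj E S x y = (if [x, y] \<in> rels S E then 1 else 0)"

definition frac_iso_graph :: "'r \<Rightarrow> ('r, 'a) struc \<Rightarrow> ('r, 'b) struc \<Rightarrow> bool" where
  "frac_iso_graph E A B \<longleftrightarrow>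
     (\<exists>P :: 'b \<Rightarrow> 'a \<Rightarrow> real. doubly_stochastic (univ B) (univ A) P \<and>
        (\<forall>b\<in>univ B. \<forall>a\<in>univ A.
           (\<Sum>a'\<in>univ A. P b a' * adj E A a' a) = (\<Sum>b'\<in>univ B. adj E B b b' * P b' a)))"

end

theory Submission
  imports Defs
begin

text \<open>
  For a doubly stochastic \<open>P\<close>, \<open>P x = y\<close> and \<open>P\<^sup>T y = x\<close> force \<open>x a = y b\<close> whenever
  \<open>P b a > 0\<close>. Applied to indicator vectors of iterated-degree classes, the intertwining
  relations of (1) therefore propagate, level by level, that \<open>P b a > 0\<close> and \<open>Q d c > 0\<close> only
  link vertices of equal iterated degree; doubly stochastic matrices then preserve the sizes of
  the degree classes, giving (2). Conversely, the partition into iterated-degree classes is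
  equitable: only finitely many degrees occur, so some level \<open>K\<close> already separates them, and
  the number of neighbours of each degree and label is read off from the degree at level
  \<open>K + 1\<close>; this gives (3). The matrices that are uniform between corresponding blocks of a
  common equitable partition satisfy (1). For graphs, the adjacency matrix factors as
  \<open>M\<^bsup>({0},E)\<^esup> (M\<^bsup>({1},E)\<^esup>)\<^sup>T\<close>, giving (1) \<open>\<Longrightarrow>\<close> (4); and (4) \<open>\<Longrightarrow>\<close> (2) follows by the same
  propagation argument for the symmetric adjacency matrix, since an edge constraint's degree is
  determined by the degrees of its endpoints.
\<close>

section \<open>Doubly stochastic matrices\<close>

lemma doubly_stochastic_compatible_sums:
  fixes Q :: "'d \<Rightarrow> 'c \<Rightarrow> real"
  assumes ds: "doubly_stochastic D C Q"
    and compat: "\<And>d c. d \<in> D \<Longrightarrow> c \<in> C \<Longrightarrow> Q d c > 0 \<Longrightarrow> f c = g d"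
  shows "d \<in> D \<Longrightarrow> (\<Sum>c\<in>C. Q d c * f c) = g d"
    and "c \<in> C \<Longrightarrow> (\<Sum>d\<in>D. Q d c * g d) = f c"
proof -
  have nonneg: "\<And>d c. d \<in> D \<Longrightarrow> c \<in> C \<Longrightarrow> Q d c \<ge> 0"
    using ds unfolding doubly_stochastic_def by blast
  have support: "Q d c * f c = Q d c * g d" if "d \<in> D" "c \<in> C" for d c
  proof (cases "Q d c > 0")
    case True
    then show ?thesis using compat that by simp
  next
    case False
    then have "Q d c = 0" using nonneg that by force
    then show ?thesis by simp
  qed
  show "(\<Sum>c\<in>C. Q d c * f c) = g d" if d: "d \<in> D"
  proof -
    have "(\<Sum>c\<in>C. Q d c * f c) = (\<Sum>c\<in>C. Q d c) * g d"
      unfolding sum_distrib_right using d by (intro sum.cong) (auto simp: support)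
    then show ?thesis using ds d unfolding doubly_stochastic_def by simp
  qed
  show "(\<Sum>d\<in>D. Q d c * g d) = f c" if c: "c \<in> C"
  proof -
    have "(\<Sum>d\<in>D. Q d c * g d) = (\<Sum>d\<in>D. Q d c) * f c"
      unfolding sum_distrib_right using c by (intro sum.cong) (auto simp: support)
    then show ?thesis using ds c unfolding doubly_stochastic_def by simp
  qed
qed

text \<open>Expanding with both relations shows \<open>\<Sum>\<^sub>b\<^sub>a P b a (x a - y b)\<^sup>2 = 0\<close>.\<close>

lemma doubly_stochastic_support_compatible:
  fixes P :: "'b \<Rightarrow> 'a \<Rightarrow> real"
  assumes fin: "finite A" "finite B" and ds: "doubly_stochastic B A P"
    and Px: "\<And>b. b \<in> B \<Longrightarrow> (\<Sum>a\<in>A. P b a * x a) = y b"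
    and Py: "\<And>a. a \<in> A \<Longrightarrow> (\<Sum>b\<in>B. P b a * y b) = x a"
    and b: "b \<in> B" and a: "a \<in> A" and pos: "P b a > 0"
  shows "x a = y b"
proof -
  have nonneg: "\<forall>b\<in>B. \<forall>a\<in>A. P b a \<ge> 0"
    and rows: "\<forall>b\<in>B. (\<Sum>a\<in>A. P b a) = 1" and cols: "\<forall>a\<in>A. (\<Sum>b\<in>B. P b a) = 1"
    using ds unfolding doubly_stochastic_def by auto
  have xx: "(\<Sum>b\<in>B. \<Sum>a\<in>A. P b a * (x a)\<^sup>2) = (\<Sum>a\<in>A. (x a)\<^sup>2)"
    using cols by (subst sum.swap) (simp flip: sum_distrib_right)
  have yy: "(\<Sum>b\<in>B. \<Sum>a\<in>A. P b a * (y b)\<^sup>2) = (\<Sum>b\<in>B. (y b)\<^sup>2)"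
    using rows by (simp flip: sum_distrib_right)
  have xy_y: "(\<Sum>b\<in>B. \<Sum>a\<in>A. P b a * x a * y b) = (\<Sum>b\<in>B. (y b)\<^sup>2)"
    using Px by (simp add: power2_eq_square flip: sum_distrib_right)
  have xy_x: "(\<Sum>b\<in>B. \<Sum>a\<in>A. P b a * x a * y b) = (\<Sum>a\<in>A. (x a)\<^sup>2)"
  proof -
    have "(\<Sum>b\<in>B. \<Sum>a\<in>A. P b a * x a * y b) = (\<Sum>a\<in>A. x a * (\<Sum>b\<in>B. P b a * y b))"
      by (simp add: sum.swap[of _ B] sum_distrib_left mult_ac)
    then show ?thesis using Py by (simp add: power2_eq_square)
  qed
  have "(\<Sum>b\<in>B. \<Sum>a\<in>A. P b a * (x a - y b)\<^sup>2) =
     (\<Sum>b\<in>B. \<Sum>a\<in>A. P b a * (x a)\<^sup>2) - 2 * (\<Sum>b\<in>B. \<Sum>a\<in>A. P b a * x a * y b)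
       + (\<Sum>b\<in>B. \<Sum>a\<in>A. P b a * (y b)\<^sup>2)"
    by (simp add: power2_diff algebra_simps sum.distrib sum_subtractf sum_distrib_left)
  also have "\<dots> = 0" using xx yy xy_x xy_y by simp
  finally have zero: "(\<Sum>b\<in>B. \<Sum>a\<in>A. P b a * (x a - y b)\<^sup>2) = 0" .
  have terms_nonneg: "\<forall>b\<in>B. \<forall>a\<in>A. P b a * (x a - y b)\<^sup>2 \<ge> 0" using nonneg by auto
  then have "(\<Sum>a\<in>A. P b a * (x a - y b)\<^sup>2) = 0"
    using zero fin b by (subst (asm) sum_nonneg_eq_0_iff) (auto intro: sum_nonneg)
  then have "P b a * (x a - y b)\<^sup>2 = 0"
    using terms_nonneg fin b a by (subst (asm) sum_nonneg_eq_0_iff) auto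
  then show ?thesis using pos by simp
qed

lemma doubly_stochastic_intertwining_compatible:
  fixes P :: "'b \<Rightarrow> 'a \<Rightarrow> real" and Q :: "'d \<Rightarrow> 'c \<Rightarrow> real"
  assumes fin: "finite A" "finite B" "finite C" "finite D"
    and dsP: "doubly_stochastic B A P" and dsQ: "doubly_stochastic D C Q"
    and PM: "\<And>b c. b \<in> B \<Longrightarrow> c \<in> C \<Longrightarrow> (\<Sum>a\<in>A. P b a * M a c) = (\<Sum>d\<in>D. N b d * Q d c)"
    and MQ: "\<And>a d. a \<in> A \<Longrightarrow> d \<in> D \<Longrightarrow> (\<Sum>c\<in>C. M a c * Q d c) = (\<Sum>b\<in>B. P b a * N b d)"
    and compat: "\<And>d c. d \<in> D \<Longrightarrow> c \<in> C \<Longrightarrow> Q d c > 0 \<Longrightarrow> z c = w d"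
    and b: "b \<in> B" and a: "a \<in> A" and pos: "P b a > 0"
  shows "(\<Sum>c\<in>C. M a c * z c) = (\<Sum>d\<in>D. N b d * w d)"
proof (rule doubly_stochastic_support_compatible[OF fin(1,2) dsP _ _ b a pos])
  note Qzw = doubly_stochastic_compatible_sums[where f = z and g = w, OF dsQ compat]
  show "(\<Sum>a\<in>A. P b a * (\<Sum>c\<in>C. M a c * z c)) = (\<Sum>d\<in>D. N b d * w d)" if b: "b \<in> B" for b
  proof -
    have "(\<Sum>a\<in>A. P b a * (\<Sum>c\<in>C. M a c * z c)) = (\<Sum>c\<in>C. (\<Sum>a\<in>A. P b a * M a c) * z c)"
      by (simp add: sum_distrib_left sum_distrib_right mult_ac sum.swap[of _ A])
    also have "\<dots> = (\<Sum>c\<in>C. (\<Sum>d\<in>D. N b d * Q d c) * z c)" using PM b by simp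
    also have "\<dots> = (\<Sum>d\<in>D. N b d * (\<Sum>c\<in>C. Q d c * z c))"
      by (simp add: sum_distrib_left sum_distrib_right mult_ac sum.swap[of _ C])
    also have "\<dots> = (\<Sum>d\<in>D. N b d * w d)" using Qzw(1) by simp
    finally show ?thesis .
  qed
  show "(\<Sum>b\<in>B. P b a * (\<Sum>d\<in>D. N b d * w d)) = (\<Sum>c\<in>C. M a c * z c)" if a: "a \<in> A" for a
  proof -
    have "(\<Sum>b\<in>B. P b a * (\<Sum>d\<in>D. N b d * w d)) = (\<Sum>d\<in>D. (\<Sum>b\<in>B. P b a * N b d) * w d)"
      by (simp add: sum_distrib_left sum_distrib_right mult_ac sum.swap[of _ B])
    also have "\<dots> = (\<Sum>d\<in>D. (\<Sum>c\<in>C. M a c * Q d c) * w d)" using MQ a by simp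
    also have "\<dots> = (\<Sum>c\<in>C. M a c * (\<Sum>d\<in>D. Q d c * w d))"
      by (simp add: sum_distrib_left sum_distrib_right mult_ac sum.swap[of _ D])
    also have "\<dots> = (\<Sum>c\<in>C. M a c * z c)" using Qzw(2) by simp
    finally show ?thesis .
  qed
qed

lemma card_eq_sum_indicator:
  "finite X \<Longrightarrow> real (card {x \<in> X. p x}) = (\<Sum>x\<in>X. if p x then 1 else 0)"
  by (simp add: sum.If_cases Int_def)

lemma real_card_conj_eq_sum_indicators:
  assumes "finite X"
  shows "real (card {x \<in> X. p x \<and> q x}) =
    (\<Sum>x\<in>X. (if p x then 1 else 0) * (if q x then 1 else 0))"
proof -
  have "(\<Sum>x\<in>X. (if p x then 1 else 0) * (if q x then 1 else 0)) =
      (\<Sum>x\<in>X. if p x \<and> q x then 1 else 0 :: real)"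
    by (intro sum.cong) auto
  then show ?thesis using card_eq_sum_indicator[OF assms] by simp
qed

lemma doubly_stochastic_card_eq:
  fixes P :: "'b \<Rightarrow> 'a \<Rightarrow> real"
  assumes fin: "finite A" "finite B" and ds: "doubly_stochastic B A P"
    and compat: "\<And>b a. b \<in> B \<Longrightarrow> a \<in> A \<Longrightarrow> P b a > 0 \<Longrightarrow> f a = g b"
  shows "card {a \<in> A. f a = t} = card {b \<in> B. g b = t}"
proof -
  let ?z = "\<lambda>a. if f a = t then 1 else 0 :: real" and ?w = "\<lambda>b. if g b = t then 1 else 0 :: real"
  have Pzw: "(\<Sum>a\<in>A. P b a * ?z a) = ?w b" if "b \<in> B" for b
    using doubly_stochastic_compatible_sums(1)[of B A P ?z ?w] ds compat that by auto
  have cols: "\<forall>a\<in>A. (\<Sum>b\<in>B. P b a) = 1" using ds unfolding doubly_stochastic_def by auto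
  have "(\<Sum>b\<in>B. ?w b) = (\<Sum>a\<in>A. (\<Sum>b\<in>B. P b a) * ?z a)"
    using Pzw by (simp add: sum.swap[of _ B] sum_distrib_right)
  also have "\<dots> = (\<Sum>a\<in>A. ?z a)" using cols by simp
  finally have "real (card {a \<in> A. f a = t}) = real (card {b \<in> B. g b = t})"
    using fin by (simp add: card_eq_sum_indicator)
  then show ?thesis by simp
qed

lemma doubly_stochastic_bilinear_eq:
  fixes P :: "'b \<Rightarrow> 'a \<Rightarrow> real"
  assumes ds: "doubly_stochastic B A P"
    and PN: "\<And>b a. b \<in> B \<Longrightarrow> a \<in> A \<Longrightarrow>
      (\<Sum>a'\<in>A. P b a' * NA a' a) = (\<Sum>b'\<in>B. NB b b' * P b' a)"
    and compat: "\<And>b a. b \<in> B \<Longrightarrow> a \<in> A \<Longrightarrow> P b a > 0 \<Longrightarrow> f a = g b"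
  shows "(\<Sum>u\<in>A. \<Sum>v\<in>A. NA u v * \<phi> (f u) (f v)) = (\<Sum>u\<in>B. \<Sum>v\<in>B. NB u v * \<phi> (g u) (g v))"
proof -
  have left: "(\<Sum>b\<in>B. P b u * \<phi> (g b) (f v)) = \<phi> (f u) (f v)" if "u \<in> A" for u v
    using doubly_stochastic_compatible_sums(2)[OF ds, of "\<lambda>a. \<phi> (f a) (f v)"] compat that by auto
  have right: "(\<Sum>v\<in>A. P b' v * \<phi> (g b) (f v)) = \<phi> (g b) (g b')" if "b' \<in> B" for b b'
    using doubly_stochastic_compatible_sums(1)[OF ds, of "\<lambda>a. \<phi> (g b) (f a)"] compat that by auto
  have "(\<Sum>u\<in>A. \<Sum>v\<in>A. NA u v * \<phi> (f u) (f v)) =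
        (\<Sum>u\<in>A. \<Sum>v\<in>A. NA u v * (\<Sum>b\<in>B. P b u * \<phi> (g b) (f v)))"
    using left by simp
  also have "\<dots> = (\<Sum>u\<in>A. \<Sum>v\<in>A. \<Sum>b\<in>B. P b u * NA u v * \<phi> (g b) (f v))"
    by (simp add: sum_distrib_left mult_ac)
  also have "\<dots> = (\<Sum>b\<in>B. \<Sum>u\<in>A. \<Sum>v\<in>A. P b u * NA u v * \<phi> (g b) (f v))"
    by (simp only: sum.swap[of _ A B])
  also have "\<dots> = (\<Sum>b\<in>B. \<Sum>v\<in>A. \<Sum>u\<in>A. P b u * NA u v * \<phi> (g b) (f v))"
    by (rule sum.cong[OF refl], rule sum.swap)
  also have "\<dots> = (\<Sum>b\<in>B. \<Sum>v\<in>A. (\<Sum>u\<in>A. P b u * NA u v) * \<phi> (g b) (f v))"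
    by (simp only: sum_distrib_right)
  also have "\<dots> = (\<Sum>b\<in>B. \<Sum>v\<in>A. \<Sum>b'\<in>B. NB b b' * P b' v * \<phi> (g b) (f v))"
    using PN by (simp add: sum_distrib_right)
  also have "\<dots> = (\<Sum>b\<in>B. \<Sum>b'\<in>B. NB b b' * (\<Sum>v\<in>A. P b' v * \<phi> (g b) (f v)))"
    by (simp only: sum.swap[of _ A B] sum_distrib_left mult.assoc)
  also have "\<dots> = (\<Sum>u\<in>B. \<Sum>v\<in>B. NB u v * \<phi> (g u) (g v))"
    using right by simp
  finally show ?thesis .
qed

section \<open>Structures and iterated degrees\<close>

lemma finite_univ: "is_structure sig ar S \<Longrightarrow> finite (univ S)"
  unfolding is_structure_def by auto

lemma finite_constraints:
  assumes "is_structure sig ar S"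
  shows "finite (constraints sig S)"
proof -
  have "constraints sig S = Sigma sig (rels S)" unfolding constraints_def by auto
  moreover have "finite (rels S R)" if "R \<in> sig" for R
  proof (rule finite_subset)
    show "rels S R \<subseteq> {t. set t \<subseteq> univ S \<and> length t = ar R}"
      using assms that unfolding is_structure_def by auto
    show "finite {t. set t \<subseteq> univ S \<and> length t = ar R}"
      using assms by (intro finite_lists_length_eq) (simp add: is_structure_def)
  qed
  ultimately show ?thesis
    using assms unfolding is_structure_def is_signature_def by auto
qed

lemma constraintD:
  assumes "is_structure sig ar S" "c \<in> constraints sig S"
  shows "fst c \<in> sig" "snd c \<in> rels S (fst c)" "length (snd c) = ar (fst c)"
    "set (snd c) \<subseteq> univ S" "set (snd c) \<noteq> {}"
proof -
  show sig: "fst c \<in> sig" and "snd c \<in> rels S (fst c)"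
    using assms(2) unfolding constraints_def by auto
  then show len: "length (snd c) = ar (fst c)" and "set (snd c) \<subseteq> univ S"
    using assms(1) unfolding is_structure_def by auto
  have "ar (fst c) \<ge> 1"
    using assms(1) sig unfolding is_structure_def is_signature_def by auto
  then show "set (snd c) \<noteq> {}" using len by auto
qed

lemma Mlab_in_labels:
  assumes "is_structure sig ar S" "c \<in> constraints sig S"
  shows "Mlab a c \<in> labels sig ar"
  using constraintD(1,3)[OF assms] unfolding Mlab_def labels_def by auto

lemma snd_Mlab [simp]: "snd (Mlab a c) = fst c"
  unfolding Mlab_def by simp

lemma fst_Mlab_empty_iff: "fst (Mlab a c) = {} \<longleftrightarrow> a \<notin> set (snd c)"
  unfolding Mlab_def by (auto simp: in_set_conv_nth)

lemma count_image_mset_mset_set: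
  assumes "finite X"
  shows "count (image_mset g (mset_set X)) y = card {x \<in> X. g x = y}"
proof -
  have "count (image_mset g (mset_set X)) y = (\<Sum>x\<in>g -` {y} \<inter> X. 1)"
    using assms by (simp add: count_image_mset)
  then show ?thesis by (simp add: Int_def conj_commute)
qed

definition iterated_degree :: "'r set \<Rightarrow> ('r, 'a) struc \<Rightarrow> 'a + ('r, 'a) constr \<Rightarrow> nat \<Rightarrow> 'r deg"
  where "iterated_degree sig S v = (\<lambda>j. ideg sig S j v)"

lemma iterated_degree_sequence_eq:
  "iterated_degree_sequence sig S =
    image_mset (iterated_degree sig S) (mset_set (fg_vertices sig S))"
  unfolding iterated_degree_sequence_def iterated_degree_def ..

lemma count_iterated_degree_sequence:
  assumes S: "is_structure sig ar S"
  shows "count (iterated_degree_sequence sig S) T =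
    card {a \<in> univ S. iterated_degree sig S (Inl a) = T} +
    card {c \<in> constraints sig S. iterated_degree sig S (Inr c) = T}"
proof -
  let ?\<delta> = "iterated_degree sig S"
  have fin: "finite (univ S)" "finite (constraints sig S)"
    using finite_univ[OF S] finite_constraints[OF S] .
  then have "finite (fg_vertices sig S)" unfolding fg_vertices_def by simp
  moreover have "{v \<in> fg_vertices sig S. ?\<delta> v = T} =
      {a \<in> univ S. ?\<delta> (Inl a) = T} <+> {c \<in> constraints sig S. ?\<delta> (Inr c) = T}"
    unfolding fg_vertices_def by auto
  ultimately show ?thesis
    using fin by (simp add: iterated_degree_sequence_eq count_image_mset_mset_set card_Plus)
qed

lemma count_incident_constraints:
  fixes sig :: "'r set"
  assumes S: "is_structure sig ar S"
  shows "count (image_mset (\<lambda>c. (Mlab a c, ideg sig S k (Inr c)))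
        (mset_set {c \<in> constraints sig S. a \<in> set (snd c)})) (l, t) =
      (if fst l = {} \<or> l \<notin> labels sig ar then 0
       else card {c \<in> constraints sig S. Mlab a c = l \<and> ideg sig S k (Inr c) = t})"
proof -
  have "{c \<in> {c \<in> constraints sig S. a \<in> set (snd c)}. (Mlab a c, ideg sig S k (Inr c)) = (l, t)} =
      (if fst l = {} \<or> l \<notin> labels sig ar then {}
       else {c \<in> constraints sig S. Mlab a c = l \<and> ideg sig S k (Inr c) = t})"
    using Mlab_in_labels[OF S, of _ a] fst_Mlab_empty_iff[of a] by force
  then show ?thesis
    using finite_constraints[OF S] by (simp add: count_image_mset_mset_set)
qed

lemma count_incident_elements:
  fixes sig :: "'r set"
  assumes S: "is_structure sig ar S" and c: "c \<in> constraints sig S"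
  shows "count (image_mset (\<lambda>a. (Mlab a c, ideg sig S k (Inl a))) (mset_set (set (snd c)))) (l, t) =
      (if fst l = {} \<or> l \<notin> labels sig ar then 0
       else card {a \<in> univ S. Mlab a c = l \<and> ideg sig S k (Inl a) = t})"
proof -
  have "{a \<in> set (snd c). (Mlab a c, ideg sig S k (Inl a)) = (l, t)} =
      (if fst l = {} \<or> l \<notin> labels sig ar then {}
       else {a \<in> univ S. Mlab a c = l \<and> ideg sig S k (Inl a) = t})"
    using Mlab_in_labels[OF S c] fst_Mlab_empty_iff[of _ c] constraintD(4)[OF S c] by force
  then show ?thesis by (simp add: count_image_mset_mset_set)
qed

lemma ideg_Suc_Inl_eqI:
  fixes sig :: "'r set"
  assumes S: "is_structure sig ar S" and S': "is_structure sig ar S'"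
    and card_eq: "\<And>l t. l \<in> labels sig ar \<Longrightarrow> fst l \<noteq> {} \<Longrightarrow>
      card {c \<in> constraints sig S. Mlab a c = l \<and> ideg sig S k (Inr c) = t} =
      card {c \<in> constraints sig S'. Mlab a' c = l \<and> ideg sig S' k (Inr c) = t}"
  shows "ideg sig S (Suc k) (Inl a) = ideg sig S' (Suc k) (Inl a')"
  by (auto intro!: multiset_eqI simp: count_incident_constraints[OF S]
      count_incident_constraints[OF S'] card_eq)

lemma ideg_Suc_Inr_eqI:
  fixes sig :: "'r set"
  assumes S: "is_structure sig ar S" and S': "is_structure sig ar S'"
    and c: "c \<in> constraints sig S" and c': "c' \<in> constraints sig S'"
    and card_eq: "\<And>l t. l \<in> labels sig ar \<Longrightarrow> fst l \<noteq> {} \<Longrightarrow>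
      card {a \<in> univ S. Mlab a c = l \<and> ideg sig S k (Inl a) = t} =
      card {a \<in> univ S'. Mlab a c' = l \<and> ideg sig S' k (Inl a) = t}"
  shows "ideg sig S (Suc k) (Inr c) = ideg sig S' (Suc k) (Inr c')"
  by (auto intro!: multiset_eqI simp: count_incident_elements[OF S c]
      count_incident_elements[OF S' c'] card_eq)

section \<open>Fractional isomorphisms preserve iterated degrees\<close>

lemma frac_iso_compatible_ideg:
  fixes sig :: "'r set" and P :: "'b \<Rightarrow> 'a \<Rightarrow> real"
    and Q :: "('r, 'b) constr \<Rightarrow> ('r, 'a) constr \<Rightarrow> real"
  assumes A: "is_structure sig ar A" and B: "is_structure sig ar B"
    and dsP: "doubly_stochastic (univ B) (univ A) P"
    and dsQ: "doubly_stochastic (constraints sig B) (constraints sig A) Q"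
    and PM: "\<And>l b c. l \<in> labels sig ar \<Longrightarrow> b \<in> univ B \<Longrightarrow> c \<in> constraints sig A \<Longrightarrow>
      (\<Sum>a\<in>univ A. P b a * Mell l a c) = (\<Sum>d\<in>constraints sig B. Mell l b d * Q d c)"
    and MQ: "\<And>l a d. l \<in> labels sig ar \<Longrightarrow> a \<in> univ A \<Longrightarrow> d \<in> constraints sig B \<Longrightarrow>
      (\<Sum>c\<in>constraints sig A. Mell l a c * Q d c) = (\<Sum>b\<in>univ B. P b a * Mell l b d)"
  shows "(\<forall>b\<in>univ B. \<forall>a\<in>univ A. P b a > 0 \<longrightarrow> ideg sig A k (Inl a) = ideg sig B k (Inl b)) \<and>
         (\<forall>d\<in>constraints sig B. \<forall>c\<in>constraints sig A. Q d c > 0 \<longrightarrow>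
            ideg sig A k (Inr c) = ideg sig B k (Inr d))"
proof (induction k)
  case 0
  show ?case by simp
next
  case (Suc k)
  note fin = finite_univ[OF A] finite_univ[OF B] finite_constraints[OF A] finite_constraints[OF B]
  have "ideg sig A (Suc k) (Inl a) = ideg sig B (Suc k) (Inl b)"
    if b: "b \<in> univ B" and a: "a \<in> univ A" and pos: "P b a > 0" for a b
  proof (rule ideg_Suc_Inl_eqI[OF A B])
    fix l t assume l: "l \<in> labels sig ar"
    let ?z = "\<lambda>c. if ideg sig A k (Inr c) = t then 1 else 0 :: real"
      and ?w = "\<lambda>d. if ideg sig B k (Inr d) = t then 1 else 0 :: real"
    have "(\<Sum>c\<in>constraints sig A. Mell l a c * ?z c) = (\<Sum>d\<in>constraints sig B. Mell l b d * ?w d)"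
      by (rule doubly_stochastic_intertwining_compatible[OF fin dsP dsQ _ _ _ b a pos])
        (use PM MQ l Suc.IH in auto)
    then show "card {c \<in> constraints sig A. Mlab a c = l \<and> ideg sig A k (Inr c) = t} =
        card {d \<in> constraints sig B. Mlab b d = l \<and> ideg sig B k (Inr d) = t}"
      by (simp add: Mell_def flip: real_card_conj_eq_sum_indicators[OF fin(3)]
          real_card_conj_eq_sum_indicators[OF fin(4)])
  qed
  moreover have "ideg sig A (Suc k) (Inr c) = ideg sig B (Suc k) (Inr d)"
    if d: "d \<in> constraints sig B" and c: "c \<in> constraints sig A" and pos: "Q d c > 0" for c d
  proof (rule ideg_Suc_Inr_eqI[OF A B c d])
    fix l t assume l: "l \<in> labels sig ar"
    let ?z = "\<lambda>a. if ideg sig A k (Inl a) = t then 1 else 0 :: real"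
      and ?w = "\<lambda>b. if ideg sig B k (Inl b) = t then 1 else 0 :: real"
    have "(\<Sum>a\<in>univ A. Mell l a c * ?z a) = (\<Sum>b\<in>univ B. Mell l b d * ?w b)"
      by (rule doubly_stochastic_intertwining_compatible[OF fin(3,4,1,2) dsQ dsP _ _ _ d c pos])
        (use PM MQ l Suc.IH in \<open>auto simp: mult.commute\<close>)
    then show "card {a \<in> univ A. Mlab a c = l \<and> ideg sig A k (Inl a) = t} =
        card {b \<in> univ B. Mlab b d = l \<and> ideg sig B k (Inl b) = t}"
      by (simp add: Mell_def flip: real_card_conj_eq_sum_indicators[OF fin(1)]
          real_card_conj_eq_sum_indicators[OF fin(2)])
  qed
  ultimately show ?case by blast
qed

lemma frac_iso_imp_iterated_degree_sequence_eq:
  assumes A: "is_structure sig ar A" and B: "is_structure sig ar B"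
    and "frac_iso sig ar A B"
  shows "iterated_degree_sequence sig A = iterated_degree_sequence sig B"
proof (rule multiset_eqI)
  obtain P Q where dsP: "doubly_stochastic (univ B) (univ A) P"
    and dsQ: "doubly_stochastic (constraints sig B) (constraints sig A) Q"
    and intertwining: "\<forall>l\<in>labels sig ar.
      (\<forall>b\<in>univ B. \<forall>c\<in>constraints sig A.
         (\<Sum>a\<in>univ A. P b a * Mell l a c) = (\<Sum>d\<in>constraints sig B. Mell l b d * Q d c)) \<and>
      (\<forall>a\<in>univ A. \<forall>d\<in>constraints sig B.
         (\<Sum>c\<in>constraints sig A. Mell l a c * Q d c) = (\<Sum>b\<in>univ B. P b a * Mell l b d))"
    using assms(3) unfolding frac_iso_def by blast
  note compatible = frac_iso_compatible_ideg[OF A B dsP dsQ]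
  fix T
  have "card {a \<in> univ A. iterated_degree sig A (Inl a) = T} =
        card {b \<in> univ B. iterated_degree sig B (Inl b) = T}"
    by (rule doubly_stochastic_card_eq[OF finite_univ[OF A] finite_univ[OF B] dsP])
      (use compatible intertwining in \<open>auto simp: iterated_degree_def\<close>)
  moreover have "card {c \<in> constraints sig A. iterated_degree sig A (Inr c) = T} =
        card {d \<in> constraints sig B. iterated_degree sig B (Inr d) = T}"
    by (rule doubly_stochastic_card_eq[OF finite_constraints[OF A] finite_constraints[OF B] dsQ])
      (use compatible intertwining in \<open>auto simp: iterated_degree_def\<close>)
  ultimately show
    "count (iterated_degree_sequence sig A) T = count (iterated_degree_sequence sig B) T"
    by (simp add: count_iterated_degree_sequence[OF A] count_iterated_degree_sequence[OF B])
qed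

section \<open>Common equitable partitions give fractional isomorphisms\<close>

lemma indexed_partitionD:
  assumes "indexed_partition I P X"
  shows "i \<in> I \<Longrightarrow> P i \<noteq> {}"
    and "i \<in> I \<Longrightarrow> j \<in> I \<Longrightarrow> x \<in> P i \<Longrightarrow> x \<in> P j \<Longrightarrow> i = j"
    and "i \<in> I \<Longrightarrow> P i \<subseteq> X"
    and "x \<in> X \<Longrightarrow> \<exists>i\<in>I. x \<in> P i"
  using assms unfolding indexed_partition_def by blast+

lemma indexed_partition_block:
  assumes "indexed_partition I P X" "finite X" "i \<in> I"
  shows "finite (P i)" "card (P i) > 0"
proof -
  show "finite (P i)"
    using assms(2) indexed_partitionD(3)[OF assms(1,3)] by (rule finite_subset[rotated])
  then show "card (P i) > 0"
    using indexed_partitionD(1)[OF assms(1,3)] by (simp add: card_gt_0_iff)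
qed

definition part_index :: "'i set \<Rightarrow> ('i \<Rightarrow> 'x set) \<Rightarrow> 'x \<Rightarrow> 'i" where
  "part_index I P x = (THE i. i \<in> I \<and> x \<in> P i)"

lemma part_index_eq:
  assumes P: "indexed_partition I P X" and "i \<in> I" "x \<in> P i"
  shows "part_index I P x = i"
  unfolding part_index_def
  by (rule the_equality) (use assms indexed_partitionD(2)[OF P] in blast)+

lemma part_index:
  assumes P: "indexed_partition I P X" and x: "x \<in> X"
  shows "part_index I P x \<in> I" "x \<in> P (part_index I P x)"
proof -
  obtain i where "i \<in> I" "x \<in> P i" using indexed_partitionD(4)[OF P x] ..
  then show "part_index I P x \<in> I" "x \<in> P (part_index I P x)"
    using part_index_eq[OF P] by simp_all
qed

lemma part_index_block:
  assumes P: "indexed_partition I P X" and i: "i \<in> I"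
  shows "{x \<in> X. part_index I P x = i} = P i"
proof
  show "{x \<in> X. part_index I P x = i} \<subseteq> P i"
    using part_index(2)[OF P] by blast
  show "P i \<subseteq> {x \<in> X. part_index I P x = i}"
    using indexed_partitionD(3)[OF P i] part_index_eq[OF P i] by blast
qed

definition block_matrix :: "'i set \<Rightarrow> ('i \<Rightarrow> 'x set) \<Rightarrow> ('i \<Rightarrow> 'y set) \<Rightarrow> 'y \<Rightarrow> 'x \<Rightarrow> real"
  where "block_matrix I PX PY y x =
    (if part_index I PY y = part_index I PX x then 1 / card (PX (part_index I PX x)) else 0)"

lemma block_matrix_row_sum:
  assumes PX: "indexed_partition I PX X" and PY: "indexed_partition I PY Y"
    and fin: "finite X" and y: "y \<in> Y"
  shows "(\<Sum>x\<in>X. block_matrix I PX PY y x * h x) =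
    (\<Sum>x\<in>PX (part_index I PY y). h x) / card (PX (part_index I PY y))"
proof -
  let ?i = "part_index I PY y"
  have "(\<Sum>x\<in>X. block_matrix I PX PY y x * h x) =
      (\<Sum>x\<in>X. if part_index I PX x = ?i then h x / card (PX ?i) else 0)"
    unfolding block_matrix_def by (intro sum.cong) auto
  also have "\<dots> = (\<Sum>x\<in>{x \<in> X. part_index I PX x = ?i}. h x / card (PX ?i))"
    using fin by (simp add: sum.inter_filter)
  finally show ?thesis
    using part_index_block[OF PX part_index(1)[OF PY y]] by (simp add: sum_divide_distrib)
qed

lemma block_matrix_col_sum:
  assumes PX: "indexed_partition I PX X" and PY: "indexed_partition I PY Y"
    and fin: "finite Y" and x: "x \<in> X"
  shows "(\<Sum>y\<in>Y. block_matrix I PX PY y x * h y) =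
    (\<Sum>y\<in>PY (part_index I PX x). h y) / card (PX (part_index I PX x))"
proof -
  let ?i = "part_index I PX x"
  have "(\<Sum>y\<in>Y. block_matrix I PX PY y x * h y) =
      (\<Sum>y\<in>Y. if part_index I PY y = ?i then h y / card (PX ?i) else 0)"
    unfolding block_matrix_def by (intro sum.cong) auto
  also have "\<dots> = (\<Sum>y\<in>{y \<in> Y. part_index I PY y = ?i}. h y / card (PX ?i))"
    using fin by (simp add: sum.inter_filter)
  finally show ?thesis
    using part_index_block[OF PY part_index(1)[OF PX x]] by (simp add: sum_divide_distrib)
qed

lemma block_matrix_doubly_stochastic:
  assumes PX: "indexed_partition I PX X" and PY: "indexed_partition I PY Y"
    and fin: "finite X" "finite Y" and card_eq: "\<And>i. i \<in> I \<Longrightarrow> card (PX i) = card (PY i)"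
  shows "doubly_stochastic Y X (block_matrix I PX PY)"
  unfolding doubly_stochastic_def
proof (intro conjI ballI)
  show "block_matrix I PX PY y x \<ge> 0" for y x
    unfolding block_matrix_def by simp
  show "(\<Sum>x\<in>X. block_matrix I PX PY y x) = 1" if "y \<in> Y" for y
    using block_matrix_row_sum[OF PX PY fin(1) that, of "\<lambda>_. 1"]
      indexed_partition_block(2)[OF PX fin(1) part_index(1)[OF PY that]] by simp
  show "(\<Sum>y\<in>Y. block_matrix I PX PY y x) = 1" if "x \<in> X" for x
    using block_matrix_col_sum[OF PX PY fin(2) that, of "\<lambda>_. 1"]
      card_eq[OF part_index(1)[OF PX that]]
      indexed_partition_block(2)[OF PX fin(1) part_index(1)[OF PX that]] by simp
qed

lemma equitable_withD:
  assumes "equitable_with sig ar S I J P Q c d"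
  shows "indexed_partition I P (univ S)" "indexed_partition J Q (constraints sig S)"
    and "i \<in> I \<Longrightarrow> j \<in> J \<Longrightarrow> l \<in> labels sig ar \<Longrightarrow> a \<in> P i \<Longrightarrow>
      card {x \<in> Q j. Mlab a x = l} = c l i j"
    and "i \<in> I \<Longrightarrow> j \<in> J \<Longrightarrow> l \<in> labels sig ar \<Longrightarrow> x \<in> Q j \<Longrightarrow>
      card {a \<in> P i. Mlab a x = l} = d l j i"
  using assms unfolding equitable_with_def by blast+

lemma equitable_parameter_ratio:
  assumes eq: "equitable_with sig ar S I J P Q c d" and S: "is_structure sig ar S"
    and i: "i \<in> I" and j: "j \<in> J" and l: "l \<in> labels sig ar"
  shows "real (d l j i) / card (P i) = real (c l i j) / card (Q j)"
proof -
  note P_block = indexed_partition_block[OF equitable_withD(1)[OF eq] finite_univ[OF S] i]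
    and Q_block = indexed_partition_block[OF equitable_withD(2)[OF eq] finite_constraints[OF S] j]
  have "(\<Sum>a\<in>P i. \<Sum>x\<in>{x \<in> Q j. Mlab a x = l}. 1) = (\<Sum>x\<in>Q j. \<Sum>a\<in>{a \<in> P i. Mlab a x = l}. 1 :: nat)"
    using P_block(1) Q_block(1) by (rule sum.swap_restrict)
  then have "card (P i) * c l i j = card (Q j) * d l j i"
    using equitable_withD(3,4)[OF eq i j l] by simp
  then have "real (card (P i)) * real (c l i j) = real (card (Q j)) * real (d l j i)"
    by (metis of_nat_mult)
  then show ?thesis
    using P_block(2) Q_block(2) by (simp add: field_simps)
qed

lemma equitable_sum_Mell:
  assumes eq: "equitable_with sig ar S I J P Q c d" and S: "is_structure sig ar S"
    and i: "i \<in> I" and j: "j \<in> J" and l: "l \<in> labels sig ar"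
  shows "x \<in> Q j \<Longrightarrow> (\<Sum>a\<in>P i. Mell l a x) = real (d l j i)"
    and "a \<in> P i \<Longrightarrow> (\<Sum>x\<in>Q j. Mell l a x) = real (c l i j)"
proof -
  have fin: "finite (P i)" "finite (Q j)"
    using indexed_partition_block(1)[OF equitable_withD(1)[OF eq] finite_univ[OF S] i]
      indexed_partition_block(1)[OF equitable_withD(2)[OF eq] finite_constraints[OF S] j] .
  show "(\<Sum>a\<in>P i. Mell l a x) = real (d l j i)" if "x \<in> Q j"
    using equitable_withD(4)[OF eq i j l that]
      card_eq_sum_indicator[OF fin(1), of "\<lambda>a. Mlab a x = l"]
    by (simp add: Mell_def)
  show "(\<Sum>x\<in>Q j. Mell l a x) = real (c l i j)" if "a \<in> P i"
    using equitable_withD(3)[OF eq i j l that]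
      card_eq_sum_indicator[OF fin(2), of "\<lambda>x. Mlab a x = l"]
    by (simp add: Mell_def)
qed

lemma equitable_block_matrices_intertwine:
  assumes A: "is_structure sig ar A" and B: "is_structure sig ar B"
    and eqA: "equitable_with sig ar A I J PA QA c d"
    and eqB: "equitable_with sig ar B I J PB QB c d"
    and l: "l \<in> labels sig ar"
  shows "b \<in> univ B \<Longrightarrow> x \<in> constraints sig A \<Longrightarrow>
      (\<Sum>a\<in>univ A. block_matrix I PA PB b a * Mell l a x) =
      (\<Sum>y\<in>constraints sig B. Mell l b y * block_matrix J QA QB y x)"
    and "a \<in> univ A \<Longrightarrow> y \<in> constraints sig B \<Longrightarrow>
      (\<Sum>x\<in>constraints sig A. Mell l a x * block_matrix J QA QB y x) =
      (\<Sum>b\<in>univ B. block_matrix I PA PB b a * Mell l b y)"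
proof -
  note PA = equitable_withD(1)[OF eqA] and QA = equitable_withD(2)[OF eqA]
    and PB = equitable_withD(1)[OF eqB] and QB = equitable_withD(2)[OF eqB]
  note fin = finite_univ[OF A] finite_univ[OF B] finite_constraints[OF A] finite_constraints[OF B]
  show "(\<Sum>a\<in>univ A. block_matrix I PA PB b a * Mell l a x) =
      (\<Sum>y\<in>constraints sig B. Mell l b y * block_matrix J QA QB y x)"
    if b: "b \<in> univ B" and x: "x \<in> constraints sig A"
  proof -
    let ?i = "part_index I PB b" and ?j = "part_index J QA x"
    note i = part_index[OF PB b] and j = part_index[OF QA x]
    have "(\<Sum>a\<in>univ A. block_matrix I PA PB b a * Mell l a x) = d l ?j ?i / card (PA ?i)"
      unfolding block_matrix_row_sum[OF PA PB fin(1) b]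
      using equitable_sum_Mell(1)[OF eqA A i(1) j(1) l j(2)] by simp
    also have "\<dots> = c l ?i ?j / card (QA ?j)"
      using equitable_parameter_ratio[OF eqA A i(1) j(1) l] .
    also have "\<dots> = (\<Sum>y\<in>constraints sig B. Mell l b y * block_matrix J QA QB y x)"
      unfolding mult.commute[of "Mell l b _"] block_matrix_col_sum[OF QA QB fin(4) x]
      using equitable_sum_Mell(2)[OF eqB B i(1) j(1) l i(2)] by simp
    finally show ?thesis .
  qed
  show "(\<Sum>x\<in>constraints sig A. Mell l a x * block_matrix J QA QB y x) =
      (\<Sum>b\<in>univ B. block_matrix I PA PB b a * Mell l b y)"
    if a: "a \<in> univ A" and y: "y \<in> constraints sig B"
  proof -
    let ?i = "part_index I PA a" and ?j = "part_index J QB y"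
    note i = part_index[OF PA a] and j = part_index[OF QB y]
    have "(\<Sum>x\<in>constraints sig A. Mell l a x * block_matrix J QA QB y x) = c l ?i ?j / card (QA ?j)"
      unfolding mult.commute[of "Mell l a _"] block_matrix_row_sum[OF QA QB fin(3) y]
      using equitable_sum_Mell(2)[OF eqA A i(1) j(1) l i(2)] by simp
    also have "\<dots> = d l ?j ?i / card (PA ?i)"
      using equitable_parameter_ratio[OF eqA A i(1) j(1) l] by simp
    also have "\<dots> = (\<Sum>b\<in>univ B. block_matrix I PA PB b a * Mell l b y)"
      unfolding block_matrix_col_sum[OF PA PB fin(2) a]
      using equitable_sum_Mell(1)[OF eqB B i(1) j(1) l j(2)] by simp
    finally show ?thesis .
  qed
qed

lemma common_equitable_partition_imp_frac_iso:
  assumes A: "is_structure sig ar A" and B: "is_structure sig ar B"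
    and "common_equitable_partition sig ar A B"
  shows "frac_iso sig ar A B"
proof -
  obtain I J PA QA PB QB c d where eqA: "equitable_with sig ar A I J PA QA c d"
    and eqB: "equitable_with sig ar B I J PB QB c d"
    and card_P: "\<forall>i\<in>I. card (PA i) = card (PB i)" and card_Q: "\<forall>j\<in>J. card (QA j) = card (QB j)"
    using assms(3) unfolding common_equitable_partition_def by blast
  have "doubly_stochastic (univ B) (univ A) (block_matrix I PA PB)"
    using block_matrix_doubly_stochastic[OF equitable_withD(1)[OF eqA] equitable_withD(1)[OF eqB]
        finite_univ[OF A] finite_univ[OF B]] card_P by blast
  moreover have "doubly_stochastic (constraints sig B) (constraints sig A) (block_matrix J QA QB)"
    using block_matrix_doubly_stochastic[OF equitable_withD(2)[OF eqA] equitable_withD(2)[OF eqB]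
        finite_constraints[OF A] finite_constraints[OF B]] card_Q by blast
  ultimately show ?thesis
    unfolding frac_iso_def
    using equitable_block_matrices_intertwine[OF A B eqA eqB] by blast
qed

section \<open>Equal iterated degree sequences give a common equitable partition\<close>

text \<open>At level \<open>0\<close>, a vertex of the factor graph is a constraint iff it has an element
  neighbour: elements only have constraint neighbours, and every constraint has one since
  arities are positive.\<close>

fun lower_deg :: "nat \<Rightarrow> 'r deg \<Rightarrow> 'r deg" where
  "lower_deg 0 (DMulti M) = (if \<exists>p\<in>#M. snd p = DElem then DConstr else DElem)"
| "lower_deg 0 d = DElem"
| "lower_deg (Suc k) (DMulti M) = DMulti (image_mset (\<lambda>p. (fst p, lower_deg k (snd p))) M)"
| "lower_deg (Suc k) d = d"

lemma ideg_lower_deg: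
  assumes S: "is_structure sig ar S"
  shows "v \<in> fg_vertices sig S \<Longrightarrow> ideg sig S k v = lower_deg k (ideg sig S (Suc k) v)"
proof (induction k arbitrary: v)
  case 0
  show ?case
  proof (cases v)
    case (Inr c)
    then have "c \<in> constraints sig S" using "0" unfolding fg_vertices_def by auto
    then obtain a where "a \<in> set (snd c)" using constraintD(5)[OF S] by fastforce
    then show ?thesis using Inr by auto
  qed auto
next
  case (Suc k)
  show ?case
  proof (cases v)
    case (Inl a)
    have "Inr c \<in> fg_vertices sig S"
      if "c \<in># mset_set {c \<in> constraints sig S. a \<in> set (snd c)}" for c
      using that finite_constraints[OF S] unfolding fg_vertices_def by auto
    then show ?thesis
      using Inl Suc.IH by (auto simp: multiset.map_comp intro!: image_mset_cong)
  next
    case (Inr c)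
    then have c: "c \<in> constraints sig S" using Suc.prems unfolding fg_vertices_def by auto
    have "Inl a \<in> fg_vertices sig S" if "a \<in># mset_set (set (snd c))" for a
      using that constraintD(4)[OF S c] unfolding fg_vertices_def by auto
    then show ?thesis
      using Inr Suc.IH by (auto simp: multiset.map_comp intro!: image_mset_cong)
  qed
qed

lemma finite_refining_sequences_separated:
  fixes C :: "(nat \<Rightarrow> 'd) set"
  assumes fin: "finite C" and refine: "\<And>T k. T \<in> C \<Longrightarrow> T k = g k (T (Suc k))"
  obtains K where "\<And>T T'. T \<in> C \<Longrightarrow> T' \<in> C \<Longrightarrow> T K = T' K \<Longrightarrow> T = T'"
proof -
  define D where "D = {p \<in> C \<times> C. fst p \<noteq> snd p}"
  define index where "index p = (SOME k. fst p k \<noteq> snd p k)" for p :: "(nat \<Rightarrow> 'd) \<times> (nat \<Rightarrow> 'd)"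
  define K where "K = Max (insert 0 (index ` D))"
  have "T = T'" if T: "T \<in> C" and T': "T' \<in> C" and eq: "T K = T' K" for T T'
  proof (rule ccontr)
    have below: "T j = T' j" if "j \<le> K" for j
      using that
    proof (induction rule: inc_induct)
      case (step n)
      then show ?case using refine[OF T, of n] refine[OF T', of n] by simp
    qed (use eq in simp)
    assume "T \<noteq> T'"
    then have D: "(T, T') \<in> D" and differ: "\<exists>k. T k \<noteq> T' k" using T T' unfolding D_def by auto
    have "T (index (T, T')) \<noteq> T' (index (T, T'))"
      unfolding index_def using someI_ex[OF differ] by simp
    moreover have "index (T, T') \<le> K"
      unfolding K_def using fin D by (intro Max_ge) (auto simp: D_def)
    ultimately show False using below by blast
  qed
  then show thesis by (rule that)
qed

lemma set_mset_iterated_degree_sequence: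
  assumes S: "is_structure sig ar S"
  shows "set_mset (iterated_degree_sequence sig S) = iterated_degree sig S ` fg_vertices sig S"
  using finite_univ[OF S] finite_constraints[OF S]
  by (simp add: iterated_degree_sequence_eq fg_vertices_def)

lemma iterated_degree_in_sequence:
  assumes "is_structure sig ar S" "v \<in> fg_vertices sig S"
  shows "iterated_degree sig S v \<in># iterated_degree_sequence sig S"
  using assms set_mset_iterated_degree_sequence by blast

lemma iterated_degree_Inl_0 [simp]: "iterated_degree sig S (Inl a) 0 = DElem"
  and iterated_degree_Inr_0 [simp]: "iterated_degree sig S (Inr c) 0 = DConstr"
  by (simp_all add: iterated_degree_def)

lemma element_degrees_eq:
  assumes "is_structure sig ar S"
  shows "(\<lambda>a. iterated_degree sig S (Inl a)) ` univ S =
    {T \<in> set_mset (iterated_degree_sequence sig S). T 0 = DElem}"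
  unfolding set_mset_iterated_degree_sequence[OF assms] fg_vertices_def by auto

lemma constraint_degrees_eq:
  assumes "is_structure sig ar S"
  shows "(\<lambda>c. iterated_degree sig S (Inr c)) ` constraints sig S =
    {T \<in> set_mset (iterated_degree_sequence sig S). T 0 = DConstr}"
  unfolding set_mset_iterated_degree_sequence[OF assms] fg_vertices_def by auto

lemma card_degree_class:
  assumes S: "is_structure sig ar S"
  shows "card {a \<in> univ S. iterated_degree sig S (Inl a) = T} =
      (if T 0 = DElem then count (iterated_degree_sequence sig S) T else 0)"
    and "card {c \<in> constraints sig S. iterated_degree sig S (Inr c) = T} =
      (if T 0 = DConstr then count (iterated_degree_sequence sig S) T else 0)"
proof -
  have elements: "{a \<in> univ S. iterated_degree sig S (Inl a) = T} = {}" if "T 0 \<noteq> DElem"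
    using that by (auto dest: fun_cong[where x = 0])
  have constraints: "{c \<in> constraints sig S. iterated_degree sig S (Inr c) = T} = {}"
    if "T 0 \<noteq> DConstr"
    using that by (auto dest: fun_cong[where x = 0])
  show "card {a \<in> univ S. iterated_degree sig S (Inl a) = T} =
      (if T 0 = DElem then count (iterated_degree_sequence sig S) T else 0)"
  proof (cases "T 0 = DElem")
    case True
    then have "T 0 \<noteq> DConstr" by simp
    show ?thesis
      using True count_iterated_degree_sequence[OF S, of T]
      unfolding constraints[OF \<open>T 0 \<noteq> DConstr\<close>] by simp
  next
    case False
    show ?thesis unfolding elements[OF False] using False by simp
  qed
  show "card {c \<in> constraints sig S. iterated_degree sig S (Inr c) = T} =
      (if T 0 = DConstr then count (iterated_degree_sequence sig S) T else 0)"
  proof (cases "T 0 = DConstr")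
    case True
    then have "T 0 \<noteq> DElem" by simp
    show ?thesis
      using True count_iterated_degree_sequence[OF S, of T]
      unfolding elements[OF \<open>T 0 \<noteq> DElem\<close>] by simp
  next
    case False
    show ?thesis unfolding constraints[OF False] using False by simp
  qed
qed

lemma card_degree_class_eq:
  assumes S: "is_structure sig ar S" and S': "is_structure sig ar S'"
    and ids: "iterated_degree_sequence sig S = iterated_degree_sequence sig S'"
  shows "card {a \<in> univ S. iterated_degree sig S (Inl a) = T} =
      card {a \<in> univ S'. iterated_degree sig S' (Inl a) = T}"
    and "card {c \<in> constraints sig S. iterated_degree sig S (Inr c) = T} =
      card {c \<in> constraints sig S'. iterated_degree sig S' (Inr c) = T}"
  by (simp_all only: card_degree_class[OF S] card_degree_class[OF S'] ids)

lemma relation_eq_if_iterated_degree_eq: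
  assumes S: "is_structure sig ar S" and S': "is_structure sig ar S'"
    and c: "c \<in> constraints sig S" and c': "c' \<in> constraints sig S'"
    and eq: "iterated_degree sig S (Inr c) = iterated_degree sig S' (Inr c')"
  shows "fst c = fst c'"
proof -
  have level_1: "ideg sig S 1 (Inr c) = ideg sig S' 1 (Inr c')"
    by (rule fun_cong[OF eq[unfolded iterated_degree_def]])
  have "(\<lambda>a. fst c) ` set (snd c) = (\<lambda>a. fst c') ` set (snd c')"
    using arg_cong[where f = "\<lambda>d. case d of DMulti M \<Rightarrow> (snd \<circ> fst) ` set_mset M | _ \<Rightarrow> {}",
        OF level_1]
    by (simp add: image_image)
  then show ?thesis
    using constraintD(5)[OF S c] constraintD(5)[OF S' c'] by (simp add: image_constant_conv)
qed

lemma size_filter_image_mset_mset_set: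
  "finite X \<Longrightarrow> size (filter_mset P (image_mset f (mset_set X))) = card {x \<in> X. P (f x)}"
  by (simp add: filter_mset_image_mset)

lemma card_incident_constraints_eq:
  assumes S: "is_structure sig ar S" and S': "is_structure sig ar S'"
    and eq: "ideg sig S (Suc k) (Inl a) = ideg sig S' (Suc k) (Inl a')"
  shows "card {c \<in> constraints sig S. a \<in> set (snd c) \<and> \<Phi> (Mlab a c) (ideg sig S k (Inr c))} =
    card {c \<in> constraints sig S'. a' \<in> set (snd c) \<and> \<Phi> (Mlab a' c) (ideg sig S' k (Inr c))}"
  using arg_cong[OF eq, of "\<lambda>d. case d of DMulti M \<Rightarrow> size (filter_mset (case_prod \<Phi>) M) | _ \<Rightarrow> 0"]
    finite_constraints[OF S] finite_constraints[OF S']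
  by (simp add: size_filter_image_mset_mset_set conj_ac)

lemma card_incident_elements_eq:
  assumes eq: "ideg sig S (Suc k) (Inr c) = ideg sig S' (Suc k) (Inr c')"
  shows "card {a \<in> set (snd c). \<Phi> (Mlab a c) (ideg sig S k (Inl a))} =
    card {a \<in> set (snd c'). \<Phi> (Mlab a c') (ideg sig S' k (Inl a))}"
  using arg_cong[OF eq, of "\<lambda>d. case d of DMulti M \<Rightarrow> size (filter_mset (case_prod \<Phi>) M) | _ \<Rightarrow> 0"]
  by (simp add: size_filter_image_mset_mset_set)

lemma card_constraint_class_relation_eq:
  fixes sig :: "'r set"
  assumes S: "is_structure sig ar S" and S': "is_structure sig ar S'"
    and ids: "iterated_degree_sequence sig S = iterated_degree_sequence sig S'"
  shows "card {c \<in> constraints sig S. iterated_degree sig S (Inr c) = T \<and> fst c = R} =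
    card {c \<in> constraints sig S'. iterated_degree sig S' (Inr c) = T \<and> fst c = R}"
proof -
  let ?class = "\<lambda>X. {c \<in> constraints sig X. iterated_degree sig X (Inr c) = T}"
  have fin: "finite (?class S')"
    using finite_constraints[OF S'] by simp
  have class_card: "card (?class S) = card (?class S')"
    by (rule card_degree_class_eq(2)[OF S S' ids])
  show ?thesis
  proof (cases "?class S = {}")
    case True
    have "card (?class S') = 0" using class_card unfolding True by simp
    then have "?class S' = {}" using card_0_eq[OF fin] by blast
    then have "{c \<in> constraints sig S'. iterated_degree sig S' (Inr c) = T \<and> fst c = R} = {}"
      and "{c \<in> constraints sig S. iterated_degree sig S (Inr c) = T \<and> fst c = R} = {}"
      using True by blast+
    then show ?thesis by (simp only: card.empty)
  next
    case False
    then obtain c0 where c0: "c0 \<in> constraints sig S" "iterated_degree sig S (Inr c0) = T" by blast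
    have "fst c = fst c0" if "c \<in> ?class S" for c
      using that c0 relation_eq_if_iterated_degree_eq[OF S S, of c c0] by simp
    moreover have "fst c = fst c0" if "c \<in> ?class S'" for c
      using that c0 relation_eq_if_iterated_degree_eq[OF S' S, of c c0] by simp
    ultimately have "{c \<in> constraints sig S. iterated_degree sig S (Inr c) = T \<and> fst c = R} =
        (if fst c0 = R then ?class S else {})"
      and "{c \<in> constraints sig S'. iterated_degree sig S' (Inr c) = T \<and> fst c = R} =
        (if fst c0 = R then ?class S' else {})"
      by auto
    then show ?thesis using class_card by simp
  qed
qed

lemma Mlab_eq_empty_label_iff:
  "fst l = {} \<Longrightarrow> Mlab a c = l \<longleftrightarrow> a \<notin> set (snd c) \<and> fst c = snd l"
  using fst_Mlab_empty_iff[of a c] snd_Mlab[of a c] by (cases l) (auto simp: prod_eq_iff)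

definition separating_level :: "'r set \<Rightarrow> ('r, 'a) struc \<Rightarrow> nat \<Rightarrow> bool" where
  "separating_level sig S K \<longleftrightarrow>
    (\<forall>T\<in>#iterated_degree_sequence sig S. \<forall>T'\<in>#iterated_degree_sequence sig S. T K = T' K \<longrightarrow> T = T')"

lemma separating_level_exists:
  assumes S: "is_structure sig ar S"
  obtains K where "separating_level sig S K"
proof -
  have refine: "T k = lower_deg k (T (Suc k))" if T: "T \<in># iterated_degree_sequence sig S" for T k
  proof -
    obtain v where "v \<in> fg_vertices sig S" "T = iterated_degree sig S v"
      using T unfolding set_mset_iterated_degree_sequence[OF S] by blast
    then show ?thesis unfolding iterated_degree_def using ideg_lower_deg[OF S] by blast
  qed
  obtain K where "\<And>T T'. T \<in># iterated_degree_sequence sig S \<Longrightarrow>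
      T' \<in># iterated_degree_sequence sig S \<Longrightarrow> T K = T' K \<Longrightarrow> T = T'"
    using finite_refining_sequences_separated[OF finite_set_mset refine] by blast
  then have "separating_level sig S K" unfolding separating_level_def by blast
  then show thesis by (rule that)
qed

lemma iterated_degree_eq_iff_separating_level:
  assumes S: "is_structure sig ar S" and K: "separating_level sig S K"
    and v: "v \<in> fg_vertices sig S" and T: "T \<in># iterated_degree_sequence sig S"
  shows "iterated_degree sig S v = T \<longleftrightarrow> ideg sig S K v = T K"
  using iterated_degree_in_sequence[OF S v] K T unfolding separating_level_def
  by (auto simp: iterated_degree_def)

text \<open>In the next two counts the vertex \<open>a\<close> (resp. \<open>c\<close>) enters only through its degree at
  level \<open>K + 1\<close>, by \<open>card_incident_constraints_eq\<close> and \<open>card_incident_elements_eq\<close>.\<close>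

lemma card_constraint_class_Mlab:
  assumes S: "is_structure sig ar S" and K: "separating_level sig S K"
    and T: "T \<in># iterated_degree_sequence sig S" and a: "a \<in> univ S"
  shows "card {c \<in> constraints sig S. iterated_degree sig S (Inr c) = T \<and> Mlab a c = l} =
    (if fst l \<noteq> {}
     then card {c \<in> constraints sig S. a \<in> set (snd c) \<and> Mlab a c = l \<and> ideg sig S K (Inr c) = T K}
     else card {c \<in> constraints sig S. iterated_degree sig S (Inr c) = T \<and> fst c = snd l} -
       card {c \<in> constraints sig S.
         a \<in> set (snd c) \<and> snd (Mlab a c) = snd l \<and> ideg sig S K (Inr c) = T K})"
proof -
  have sep: "iterated_degree sig S (Inr c) = T \<longleftrightarrow> ideg sig S K (Inr c) = T K"
    if "c \<in> constraints sig S" for c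
    using iterated_degree_eq_iff_separating_level[OF S K _ T] that unfolding fg_vertices_def by blast
  show ?thesis
  proof (cases "fst l = {}")
    case True
    have "{c \<in> constraints sig S. iterated_degree sig S (Inr c) = T \<and> Mlab a c = l} =
        {c \<in> constraints sig S. iterated_degree sig S (Inr c) = T \<and> fst c = snd l} -
        {c \<in> constraints sig S.
          a \<in> set (snd c) \<and> snd (Mlab a c) = snd l \<and> ideg sig S K (Inr c) = T K}"
      using True sep by (auto simp: Mlab_eq_empty_label_iff)
    then show ?thesis
      using True finite_constraints[OF S] sep by (auto intro!: card_Diff_subset)
  next
    case False
    then have "{c \<in> constraints sig S. iterated_degree sig S (Inr c) = T \<and> Mlab a c = l} =
        {c \<in> constraints sig S. a \<in> set (snd c) \<and> Mlab a c = l \<and> ideg sig S K (Inr c) = T K}"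
      using sep fst_Mlab_empty_iff[of a] by blast
    then show ?thesis using False by simp
  qed
qed

lemma card_element_class_Mlab:
  assumes S: "is_structure sig ar S" and K: "separating_level sig S K"
    and T: "T \<in># iterated_degree_sequence sig S" and c: "c \<in> constraints sig S"
  shows "card {a \<in> univ S. iterated_degree sig S (Inl a) = T \<and> Mlab a c = l} =
    (if fst l \<noteq> {} then card {a \<in> set (snd c). Mlab a c = l \<and> ideg sig S K (Inl a) = T K}
     else if fst c = snd l
     then card {a \<in> univ S. iterated_degree sig S (Inl a) = T} -
       card {a \<in> set (snd c). ideg sig S K (Inl a) = T K}
     else 0)"
proof -
  have sep: "iterated_degree sig S (Inl a) = T \<longleftrightarrow> ideg sig S K (Inl a) = T K"
    if "a \<in> univ S" for a
    using iterated_degree_eq_iff_separating_level[OF S K _ T] that unfolding fg_vertices_def by blast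
  note incident = constraintD(4)[OF S c]
  show ?thesis
  proof (cases "fst l = {}")
    case True
    have "{a \<in> univ S. iterated_degree sig S (Inl a) = T \<and> Mlab a c = l} =
        (if fst c = snd l then {a \<in> univ S. iterated_degree sig S (Inl a) = T} -
          {a \<in> set (snd c). ideg sig S K (Inl a) = T K} else {})"
      using True sep incident by (auto simp: Mlab_eq_empty_label_iff)
    then show ?thesis
      using True finite_univ[OF S] sep incident by (auto intro!: card_Diff_subset)
  next
    case False
    then have "{a \<in> univ S. iterated_degree sig S (Inl a) = T \<and> Mlab a c = l} =
        {a \<in> set (snd c). Mlab a c = l \<and> ideg sig S K (Inl a) = T K}"
      using sep incident fst_Mlab_empty_iff[of _ c] by auto
    then show ?thesis using False by simp
  qed
qed

lemma card_constraint_class_Mlab_eq: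
  fixes sig :: "'r set"
  assumes S: "is_structure sig ar S" and S': "is_structure sig ar S'"
    and ids: "iterated_degree_sequence sig S = iterated_degree_sequence sig S'"
    and a: "a \<in> univ S" and a': "a' \<in> univ S'"
    and same: "iterated_degree sig S (Inl a) = iterated_degree sig S' (Inl a')"
  shows "card {c \<in> constraints sig S. iterated_degree sig S (Inr c) = T \<and> Mlab a c = l} =
    card {c \<in> constraints sig S'. iterated_degree sig S' (Inr c) = T \<and> Mlab a' c = l}"
proof (cases "T \<in># iterated_degree_sequence sig S")
  case False
  have "iterated_degree sig S (Inr c) \<noteq> T" if "c \<in> constraints sig S" for c
    using iterated_degree_in_sequence[OF S, of "Inr c"] that False unfolding fg_vertices_def by auto
  moreover have "iterated_degree sig S' (Inr c) \<noteq> T" if "c \<in> constraints sig S'" for c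
    using iterated_degree_in_sequence[OF S', of "Inr c"] that False ids
    unfolding fg_vertices_def by auto
  ultimately have "{c \<in> constraints sig S. iterated_degree sig S (Inr c) = T \<and> Mlab a c = l} = {}"
    and "{c \<in> constraints sig S'. iterated_degree sig S' (Inr c) = T \<and> Mlab a' c = l} = {}"
    by blast+
  then show ?thesis by (simp only: card.empty)
next
  case T: True
  obtain K where K: "separating_level sig S K" by (rule separating_level_exists[OF S])
  then have K': "separating_level sig S' K" using ids by (simp only: separating_level_def)
  have T': "T \<in># iterated_degree_sequence sig S'" using T ids by simp
  have succ: "ideg sig S (Suc K) (Inl a) = ideg sig S' (Suc K) (Inl a')"
    by (rule fun_cong[OF same[unfolded iterated_degree_def]])
  show ?thesis
    unfolding card_constraint_class_Mlab[OF S K T a] card_constraint_class_Mlab[OF S' K' T' a']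
    using card_incident_constraints_eq[OF S S' succ, of "\<lambda>m t. m = l \<and> t = T K"]
      card_incident_constraints_eq[OF S S' succ, of "\<lambda>m t. snd m = snd l \<and> t = T K"]
      card_constraint_class_relation_eq[OF S S' ids, of T "snd l"]
    by simp
qed

lemma card_element_class_Mlab_eq:
  fixes sig :: "'r set"
  assumes S: "is_structure sig ar S" and S': "is_structure sig ar S'"
    and ids: "iterated_degree_sequence sig S = iterated_degree_sequence sig S'"
    and c: "c \<in> constraints sig S" and c': "c' \<in> constraints sig S'"
    and same: "iterated_degree sig S (Inr c) = iterated_degree sig S' (Inr c')"
  shows "card {a \<in> univ S. iterated_degree sig S (Inl a) = T \<and> Mlab a c = l} =
    card {a \<in> univ S'. iterated_degree sig S' (Inl a) = T \<and> Mlab a c' = l}"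
proof (cases "T \<in># iterated_degree_sequence sig S")
  case False
  have "iterated_degree sig S (Inl a) \<noteq> T" if "a \<in> univ S" for a
    using iterated_degree_in_sequence[OF S, of "Inl a"] that False unfolding fg_vertices_def by auto
  moreover have "iterated_degree sig S' (Inl a) \<noteq> T" if "a \<in> univ S'" for a
    using iterated_degree_in_sequence[OF S', of "Inl a"] that False ids
    unfolding fg_vertices_def by auto
  ultimately have "{a \<in> univ S. iterated_degree sig S (Inl a) = T \<and> Mlab a c = l} = {}"
    and "{a \<in> univ S'. iterated_degree sig S' (Inl a) = T \<and> Mlab a c' = l} = {}"
    by blast+
  then show ?thesis by (simp only: card.empty)
next
  case T: True
  obtain K where K: "separating_level sig S K" by (rule separating_level_exists[OF S])
  then have K': "separating_level sig S' K" using ids by (simp only: separating_level_def)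
  have T': "T \<in># iterated_degree_sequence sig S'" using T ids by simp
  have succ: "ideg sig S (Suc K) (Inr c) = ideg sig S' (Suc K) (Inr c')"
    by (rule fun_cong[OF same[unfolded iterated_degree_def]])
  show ?thesis
    unfolding card_element_class_Mlab[OF S K T c] card_element_class_Mlab[OF S' K' T' c']
    using card_incident_elements_eq[OF succ, of "\<lambda>m t. m = l \<and> t = T K"]
      card_incident_elements_eq[OF succ, of "\<lambda>m t. t = T K"]
      card_degree_class_eq(1)[OF S S' ids, of T]
      relation_eq_if_iterated_degree_eq[OF S S' c c' same]
    by simp
qed

lemma indexed_partition_fibres:
  assumes e: "bij_betw e I (f ` X)"
  shows "indexed_partition I (\<lambda>i. {x \<in> X. f x = e i}) X"
  unfolding indexed_partition_def
proof (intro conjI ballI impI)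
  show "{x \<in> X. f x = e i} \<noteq> {}" if "i \<in> I" for i
    using bij_betw_apply[OF e that] by force
  show "{x \<in> X. f x = e i} \<inter> {x \<in> X. f x = e j} = {}" if "i \<in> I" "j \<in> I" "i \<noteq> j" for i j
    using bij_betw_imp_inj_on[OF e] that by (auto dest: inj_onD)
  have "f x \<in> e ` I" if "x \<in> X" for x
    using bij_betw_imp_surj_on[OF e] that by blast
  then show "(\<Union>i\<in>I. {x \<in> X. f x = e i}) = X"
    by fastforce
qed

lemma equitable_iterated_degree_partition:
  fixes sig :: "'r set" and S :: "('r, 'a) struc" and A :: "('r, 'b) struc"
  assumes S: "is_structure sig ar S" and A: "is_structure sig ar A"
    and ids: "iterated_degree_sequence sig S = iterated_degree_sequence sig A"
    and eE: "bij_betw eE I {T \<in> set_mset (iterated_degree_sequence sig A). T 0 = DElem}"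
    and eC: "bij_betw eC J {T \<in> set_mset (iterated_degree_sequence sig A). T 0 = DConstr}"
    and repE: "\<And>i. i \<in> I \<Longrightarrow> repE i \<in> univ A \<and> iterated_degree sig A (Inl (repE i)) = eE i"
    and repC: "\<And>j. j \<in> J \<Longrightarrow> repC j \<in> constraints sig A \<and> iterated_degree sig A (Inr (repC j)) = eC j"
  shows "equitable_with sig ar S I J
    (\<lambda>i. {a \<in> univ S. iterated_degree sig S (Inl a) = eE i})
    (\<lambda>j. {c \<in> constraints sig S. iterated_degree sig S (Inr c) = eC j})
    (\<lambda>l i j. card {c \<in> constraints sig A. iterated_degree sig A (Inr c) = eC j \<and> Mlab (repE i) c = l})
    (\<lambda>l j i. card {a \<in> univ A. iterated_degree sig A (Inl a) = eE i \<and> Mlab a (repC j) = l})"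
  unfolding equitable_with_def
proof (intro conjI ballI)
  show "indexed_partition I (\<lambda>i. {a \<in> univ S. iterated_degree sig S (Inl a) = eE i}) (univ S)"
    using eE by (intro indexed_partition_fibres) (simp add: element_degrees_eq[OF S] ids)
  show "indexed_partition J (\<lambda>j. {c \<in> constraints sig S. iterated_degree sig S (Inr c) = eC j})
      (constraints sig S)"
    using eC by (intro indexed_partition_fibres) (simp add: constraint_degrees_eq[OF S] ids)
next
  fix i j l a
  assume i: "i \<in> I" and j: "j \<in> J" and a: "a \<in> {a \<in> univ S. iterated_degree sig S (Inl a) = eE i}"
  have "card {c \<in> constraints sig S. iterated_degree sig S (Inr c) = eC j \<and> Mlab a c = l} =
      card {c \<in> constraints sig A. iterated_degree sig A (Inr c) = eC j \<and> Mlab (repE i) c = l}"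
    using a repE[OF i] by (intro card_constraint_class_Mlab_eq[OF S A ids]) auto
  then show "card {c \<in> {c \<in> constraints sig S. iterated_degree sig S (Inr c) = eC j}. Mlab a c = l} =
      card {c \<in> constraints sig A. iterated_degree sig A (Inr c) = eC j \<and> Mlab (repE i) c = l}"
    by (simp add: conj_assoc)
next
  fix i j l c
  assume i: "i \<in> I" and j: "j \<in> J"
    and c: "c \<in> {c \<in> constraints sig S. iterated_degree sig S (Inr c) = eC j}"
  have "card {a \<in> univ S. iterated_degree sig S (Inl a) = eE i \<and> Mlab a c = l} =
      card {a \<in> univ A. iterated_degree sig A (Inl a) = eE i \<and> Mlab a (repC j) = l}"
    using c repC[OF j] by (intro card_element_class_Mlab_eq[OF S A ids]) auto
  then show "card {a \<in> {a \<in> univ S. iterated_degree sig S (Inl a) = eE i}. Mlab a c = l} =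
      card {a \<in> univ A. iterated_degree sig A (Inl a) = eE i \<and> Mlab a (repC j) = l}"
    by (simp add: conj_assoc)
qed

lemma iterated_degree_sequence_eq_imp_common_equitable_partition:
  assumes A: "is_structure sig ar A" and B: "is_structure sig ar B"
    and ids: "iterated_degree_sequence sig A = iterated_degree_sequence sig B"
  shows "common_equitable_partition sig ar A B"
proof -
  let ?ColE = "{T \<in> set_mset (iterated_degree_sequence sig A). T 0 = DElem}"
    and ?ColC = "{T \<in> set_mset (iterated_degree_sequence sig A). T 0 = DConstr}"
  obtain eE where eE: "bij_betw eE {0..<card ?ColE} ?ColE"
    using ex_bij_betw_nat_finite[of ?ColE] by auto
  obtain eC where eC: "bij_betw eC {0..<card ?ColC} ?ColC"
    using ex_bij_betw_nat_finite[of ?ColC] by auto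
  have "eE ` {0..<card ?ColE} = (\<lambda>a. iterated_degree sig A (Inl a)) ` univ A"
    using eE element_degrees_eq[OF A] by (simp add: bij_betw_def)
  then have "\<forall>i\<in>{0..<card ?ColE}. \<exists>a. a \<in> univ A \<and> iterated_degree sig A (Inl a) = eE i"
    by (metis (no_types, lifting) imageE imageI)
  from bchoice[OF this] obtain repE
    where repE: "\<forall>i\<in>{0..<card ?ColE}.
      repE i \<in> univ A \<and> iterated_degree sig A (Inl (repE i)) = eE i" ..
  have "eC ` {0..<card ?ColC} = (\<lambda>c. iterated_degree sig A (Inr c)) ` constraints sig A"
    using eC constraint_degrees_eq[OF A] by (simp add: bij_betw_def)
  then have "\<forall>j\<in>{0..<card ?ColC}. \<exists>c. c \<in> constraints sig A \<and> iterated_degree sig A (Inr c) = eC j"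
    by (metis (no_types, lifting) imageE imageI)
  from bchoice[OF this] obtain repC
    where repC: "\<forall>j\<in>{0..<card ?ColC}.
      repC j \<in> constraints sig A \<and> iterated_degree sig A (Inr (repC j)) = eC j" ..
  note eqA = equitable_iterated_degree_partition[OF A A refl eE eC
      repE[rule_format] repC[rule_format]]
    and eqB = equitable_iterated_degree_partition[OF B A ids[symmetric] eE eC
      repE[rule_format] repC[rule_format]]
  show ?thesis
    unfolding common_equitable_partition_def
    by (rule exI)+ (rule conjI[OF eqA conjI[OF eqB]],
        simp_all add: card_degree_class_eq[OF A B ids])
qed

section \<open>Graphs\<close>

lemma graph_constraintE:
  assumes g: "is_graph sig ar E S" and S: "is_structure sig ar S" and c: "c \<in> constraints sig S"
  obtains u v where "c = (E, [u, v])" "[u, v] \<in> rels S E" "u \<noteq> v" "u \<in> univ S" "v \<in> univ S"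
proof -
  have "fst c = E" "length (snd c) = 2" "set (snd c) \<subseteq> univ S" "snd c \<in> rels S E"
    using constraintD[OF S c] g unfolding is_graph_def by auto
  then obtain u v where "c = (E, [u, v])" "[u, v] \<in> rels S E" "u \<in> univ S" "v \<in> univ S"
    by (cases c) (auto simp: numeral_2_eq_2 length_Suc_conv)
  moreover have "u \<noteq> v" using g calculation(2) unfolding is_graph_def by auto
  ultimately show thesis using that by blast
qed

lemma graph_edge_in_constraints:
  "is_graph sig ar E S \<Longrightarrow> (E, t) \<in> constraints sig S \<longleftrightarrow> t \<in> rels S E"
  unfolding is_graph_def constraints_def by auto

lemma adj_sym: "is_graph sig ar E S \<Longrightarrow> adj E S x y = adj E S y x"
  unfolding adj_def is_graph_def by auto

lemma Mlab_pair:
  "Mlab a (R, [u, v]) = ((if u = a then {0} else {}) \<union> (if v = a then {1} else {}), R)"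
proof -
  have "{i. i < length [u, v] \<and> [u, v] ! i = a} =
      (if u = a then {0} else {}) \<union> (if v = a then {1} else {})"
  proof (rule set_eqI)
    show "i \<in> {i. i < length [u, v] \<and> [u, v] ! i = a} \<longleftrightarrow>
        i \<in> (if u = a then {0} else {}) \<union> (if v = a then {1} else {})" for i
      by (cases i; cases "i - 1") auto
  qed
  then show ?thesis unfolding Mlab_def by simp
qed

lemma adj_eq_sum_Mell:
  assumes g: "is_graph sig ar E S" and S: "is_structure sig ar S"
  shows "adj E S x y = (\<Sum>c\<in>constraints sig S. Mell ({0}, E) x c * Mell ({1}, E) y c)"
proof -
  have "Mell ({0}, E) x c * Mell ({1}, E) y c = (if c = (E, [x, y]) then 1 else 0)"
    if c: "c \<in> constraints sig S" for c
  proof -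
    obtain u v where "c = (E, [u, v])" "u \<noteq> v" using graph_constraintE[OF g S c] by blast
    then show ?thesis by (auto simp: Mell_def Mlab_pair)
  qed
  then have "(\<Sum>c\<in>constraints sig S. Mell ({0}, E) x c * Mell ({1}, E) y c) =
      (\<Sum>c\<in>constraints sig S. if c = (E, [x, y]) then 1 else 0)"
    by (intro sum.cong) auto
  also have "\<dots> = adj E S x y"
    using finite_constraints[OF S] graph_edge_in_constraints[OF g] by (simp add: adj_def)
  finally show ?thesis by simp
qed

lemma frac_iso_imp_frac_iso_graph:
  assumes A: "is_structure sig ar A" and B: "is_structure sig ar B"
    and gA: "is_graph sig ar E A" and gB: "is_graph sig ar E B"
    and "frac_iso sig ar A B"
  shows "frac_iso_graph E A B"
proof -
  obtain P Q where dsP: "doubly_stochastic (univ B) (univ A) P"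
    and intertwining: "\<forall>l\<in>labels sig ar.
      (\<forall>b\<in>univ B. \<forall>c\<in>constraints sig A.
         (\<Sum>a\<in>univ A. P b a * Mell l a c) = (\<Sum>d\<in>constraints sig B. Mell l b d * Q d c)) \<and>
      (\<forall>a\<in>univ A. \<forall>d\<in>constraints sig B.
         (\<Sum>c\<in>constraints sig A. Mell l a c * Q d c) = (\<Sum>b\<in>univ B. P b a * Mell l b d))"
    using assms(5) unfolding frac_iso_def by blast
  let ?l0 = "({0}, E)" and ?l1 = "({1}, E)"
  have labels: "?l0 \<in> labels sig ar" "?l1 \<in> labels sig ar"
    using gA unfolding is_graph_def labels_def by auto
  let ?CA = "constraints sig A" and ?CB = "constraints sig B"
  have "(\<Sum>a'\<in>univ A. P b a' * adj E A a' a) = (\<Sum>b'\<in>univ B. adj E B b b' * P b' a)"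
    if b: "b \<in> univ B" and a: "a \<in> univ A" for b a
  proof -
    have "(\<Sum>a'\<in>univ A. P b a' * adj E A a' a) =
        (\<Sum>c\<in>?CA. (\<Sum>a'\<in>univ A. P b a' * Mell ?l0 a' c) * Mell ?l1 a c)"
      unfolding adj_eq_sum_Mell[OF gA A]
      by (simp add: sum_distrib_left sum_distrib_right mult_ac sum.swap[of _ "univ A"])
    also have "\<dots> = (\<Sum>c\<in>?CA. (\<Sum>d\<in>?CB. Mell ?l0 b d * Q d c) * Mell ?l1 a c)"
      using intertwining labels b by simp
    also have "\<dots> = (\<Sum>d\<in>?CB. Mell ?l0 b d * (\<Sum>c\<in>?CA. Mell ?l1 a c * Q d c))"
      by (simp add: sum_distrib_left sum_distrib_right mult_ac sum.swap[of _ ?CA])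
    also have "\<dots> = (\<Sum>d\<in>?CB. Mell ?l0 b d * (\<Sum>b'\<in>univ B. P b' a * Mell ?l1 b' d))"
      using intertwining labels a by simp
    also have "\<dots> = (\<Sum>b'\<in>univ B. adj E B b b' * P b' a)"
      unfolding adj_eq_sum_Mell[OF gB B]
      by (simp add: sum_distrib_left sum_distrib_right mult_ac sum.swap[of _ ?CB])
    finally show ?thesis .
  qed
  then show ?thesis unfolding frac_iso_graph_def using dsP by blast
qed

text \<open>The arguments \<open>x\<close>, \<open>y\<close> stand for the level \<open>j - 1\<close> degrees of the endpoints.\<close>

fun edge_deg :: "'r \<Rightarrow> nat \<Rightarrow> 'r deg \<Rightarrow> 'r deg \<Rightarrow> 'r deg" where
  "edge_deg E 0 x y = DConstr"
| "edge_deg E (Suc j) x y = DMulti {#(({0}, E), x), (({1}, E), y)#}"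

lemma ideg_edge:
  assumes g: "is_graph sig ar E S" and S: "is_structure sig ar S" and uv: "[u, v] \<in> rels S E"
  shows "ideg sig S j (Inr (E, [u, v])) =
    edge_deg E j (ideg sig S (j - 1) (Inl u)) (ideg sig S (j - 1) (Inl v))"
proof (cases j)
  case (Suc j')
  have "u \<noteq> v" using g uv unfolding is_graph_def by auto
  then show ?thesis using Suc by (simp add: Mlab_pair)
qed simp

lemma graph_incident_constraints:
  assumes g: "is_graph sig ar E S" and S: "is_structure sig ar S"
  shows "{c \<in> constraints sig S. Mlab a c = ({0}, E) \<and> \<Phi> c} =
      (\<lambda>v. (E, [a, v])) ` {v \<in> univ S. [a, v] \<in> rels S E \<and> \<Phi> (E, [a, v])}"
    and "{c \<in> constraints sig S. Mlab a c = ({1}, E) \<and> \<Phi> c} =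
      (\<lambda>v. (E, [v, a])) ` {v \<in> univ S. [a, v] \<in> rels S E \<and> \<Phi> (E, [v, a])}"
    and "fst l \<noteq> {} \<Longrightarrow> l \<noteq> ({0}, E) \<Longrightarrow> l \<noteq> ({1}, E) \<Longrightarrow>
      {c \<in> constraints sig S. Mlab a c = l} = {}"
proof -
  have sym: "[u, v] \<in> rels S E \<longleftrightarrow> [v, u] \<in> rels S E" for u v
    using g unfolding is_graph_def by blast
  have edge: "u \<noteq> v" "v \<in> univ S" if "[u, v] \<in> rels S E" for u v
    using graph_constraintE[OF g S, of "(E, [u, v])"] that graph_edge_in_constraints[OF g] by auto
  have Mlab_edge: "Mlab a (E, [u, v]) =
      (if u = a then ({0}, E) else if v = a then ({1}, E) else ({}, E))"
    if "[u, v] \<in> rels S E" for u v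
    using edge(1)[OF that] by (auto simp: Mlab_pair)
  have constraint: "c \<in> constraints sig S \<longleftrightarrow> (\<exists>u v. c = (E, [u, v]) \<and> [u, v] \<in> rels S E)" for c
    using graph_constraintE[OF g S, of c] graph_edge_in_constraints[OF g] by blast
  show "{c \<in> constraints sig S. Mlab a c = ({0}, E) \<and> \<Phi> c} =
      (\<lambda>v. (E, [a, v])) ` {v \<in> univ S. [a, v] \<in> rels S E \<and> \<Phi> (E, [a, v])}"
    unfolding constraint using Mlab_edge edge(2) by (auto split: if_splits)
  show "{c \<in> constraints sig S. Mlab a c = ({1}, E) \<and> \<Phi> c} =
      (\<lambda>v. (E, [v, a])) ` {v \<in> univ S. [a, v] \<in> rels S E \<and> \<Phi> (E, [v, a])}"
    unfolding constraint using Mlab_edge edge sym by (auto split: if_splits)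
  show "{c \<in> constraints sig S. Mlab a c = l} = {}"
    if "fst l \<noteq> {}" "l \<noteq> ({0}, E)" "l \<noteq> ({1}, E)"
    unfolding constraint using Mlab_edge that by (auto split: if_splits)
qed

lemma graph_card_incident_constraints:
  assumes g: "is_graph sig ar E S" and S: "is_structure sig ar S"
  shows "card {c \<in> constraints sig S. Mlab a c = ({0}, E) \<and> ideg sig S j (Inr c) = t} =
      card {v \<in> univ S. [a, v] \<in> rels S E \<and>
        edge_deg E j (ideg sig S (j - 1) (Inl a)) (ideg sig S (j - 1) (Inl v)) = t}"
    and "card {c \<in> constraints sig S. Mlab a c = ({1}, E) \<and> ideg sig S j (Inr c) = t} =
      card {v \<in> univ S. [a, v] \<in> rels S E \<and>
        edge_deg E j (ideg sig S (j - 1) (Inl v)) (ideg sig S (j - 1) (Inl a)) = t}"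
proof -
  have sym: "[a, v] \<in> rels S E \<Longrightarrow> [v, a] \<in> rels S E" for v
    using g unfolding is_graph_def by blast
  show "card {c \<in> constraints sig S. Mlab a c = ({0}, E) \<and> ideg sig S j (Inr c) = t} =
      card {v \<in> univ S. [a, v] \<in> rels S E \<and>
        edge_deg E j (ideg sig S (j - 1) (Inl a)) (ideg sig S (j - 1) (Inl v)) = t}"
    unfolding graph_incident_constraints(1)[OF g S]
    by (subst card_image) (auto simp: inj_on_def ideg_edge[OF g S] intro!: arg_cong[where f = card])
  show "card {c \<in> constraints sig S. Mlab a c = ({1}, E) \<and> ideg sig S j (Inr c) = t} =
      card {v \<in> univ S. [a, v] \<in> rels S E \<and>
        edge_deg E j (ideg sig S (j - 1) (Inl v)) (ideg sig S (j - 1) (Inl a)) = t}"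
    unfolding graph_incident_constraints(2)[OF g S]
    by (subst card_image)
      (auto simp: inj_on_def ideg_edge[OF g S sym] intro!: arg_cong[where f = card])
qed

lemma frac_iso_graph_card_neighbours_eq:
  fixes P :: "'b \<Rightarrow> 'a \<Rightarrow> real"
  assumes A: "is_structure sig ar A" and B: "is_structure sig ar B"
    and gA: "is_graph sig ar E A" and gB: "is_graph sig ar E B"
    and dsP: "doubly_stochastic (univ B) (univ A) P"
    and PN: "\<And>b a. b \<in> univ B \<Longrightarrow> a \<in> univ A \<Longrightarrow>
      (\<Sum>a'\<in>univ A. P b a' * adj E A a' a) = (\<Sum>b'\<in>univ B. adj E B b b' * P b' a)"
    and compat: "\<And>b a. b \<in> univ B \<Longrightarrow> a \<in> univ A \<Longrightarrow> P b a > 0 \<Longrightarrow> f a = g b"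
    and b: "b \<in> univ B" and a: "a \<in> univ A" and pos: "P b a > 0"
  shows "card {v \<in> univ A. [a, v] \<in> rels A E \<and> f v} = card {v \<in> univ B. [b, v] \<in> rels B E \<and> g v}"
proof -
  note fin = finite_univ[OF A] finite_univ[OF B]
  have "(\<Sum>v\<in>univ A. adj E A a v * (if f v then 1 else 0)) =
      (\<Sum>v\<in>univ B. adj E B b v * (if g v then 1 else 0))"
  proof (rule doubly_stochastic_intertwining_compatible[OF fin fin dsP dsP PN _ _ b a pos])
    show "(\<Sum>c\<in>univ A. adj E A a c * P d c) = (\<Sum>b\<in>univ B. P b a * adj E B b d)"
      if "a \<in> univ A" "d \<in> univ B" for a d
      using PN[OF that(2,1)] by (simp add: adj_sym[OF gA, of a] adj_sym[OF gB, of _ d] mult.commute)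
  qed (use compat in auto)
  then show ?thesis
    by (simp add: adj_def flip: real_card_conj_eq_sum_indicators[OF fin(1)]
        real_card_conj_eq_sum_indicators[OF fin(2)])
qed

lemma frac_iso_graph_ideg_Suc_eq:
  fixes sig :: "'r set" and P :: "'b \<Rightarrow> 'a \<Rightarrow> real"
  assumes A: "is_structure sig ar A" and B: "is_structure sig ar B"
    and gA: "is_graph sig ar E A" and gB: "is_graph sig ar E B"
    and dsP: "doubly_stochastic (univ B) (univ A) P"
    and PN: "\<And>b a. b \<in> univ B \<Longrightarrow> a \<in> univ A \<Longrightarrow>
      (\<Sum>a'\<in>univ A. P b a' * adj E A a' a) = (\<Sum>b'\<in>univ B. adj E B b b' * P b' a)"
    and prev: "\<And>b' a'. b' \<in> univ B \<Longrightarrow> a' \<in> univ A \<Longrightarrow> P b' a' > 0 \<Longrightarrow>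
      ideg sig A (j - 1) (Inl a') = ideg sig B (j - 1) (Inl b')"
    and b: "b \<in> univ B" and a: "a \<in> univ A" and pos: "P b a > 0"
  shows "ideg sig A (Suc j) (Inl a) = ideg sig B (Suc j) (Inl b)"
proof (rule ideg_Suc_Inl_eqI[OF A B])
  fix l :: "'r label" and t assume l: "fst l \<noteq> {}"
  consider "l = ({0}, E)" | "l = ({1}, E)" | "l \<noteq> ({0}, E)" "l \<noteq> ({1}, E)" by blast
  then show "card {c \<in> constraints sig A. Mlab a c = l \<and> ideg sig A j (Inr c) = t} =
      card {c \<in> constraints sig B. Mlab b c = l \<and> ideg sig B j (Inr c) = t}"
  proof cases
    case 1
    have "(edge_deg E j (ideg sig A (j - 1) (Inl a)) (ideg sig A (j - 1) (Inl a')) = t) =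
        (edge_deg E j (ideg sig B (j - 1) (Inl b)) (ideg sig B (j - 1) (Inl b')) = t)"
      if "b' \<in> univ B" "a' \<in> univ A" "P b' a' > 0" for a' b'
      using prev[OF that] prev[OF b a pos] by simp
    from frac_iso_graph_card_neighbours_eq[OF A B gA gB dsP PN this b a pos] show ?thesis
      unfolding 1 graph_card_incident_constraints(1)[OF gA A]
        graph_card_incident_constraints(1)[OF gB B] .
  next
    case 2
    have "(edge_deg E j (ideg sig A (j - 1) (Inl a')) (ideg sig A (j - 1) (Inl a)) = t) =
        (edge_deg E j (ideg sig B (j - 1) (Inl b')) (ideg sig B (j - 1) (Inl b)) = t)"
      if "b' \<in> univ B" "a' \<in> univ A" "P b' a' > 0" for a' b'
      using prev[OF that] prev[OF b a pos] by simp
    from frac_iso_graph_card_neighbours_eq[OF A B gA gB dsP PN this b a pos] show ?thesis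
      unfolding 2 graph_card_incident_constraints(2)[OF gA A]
        graph_card_incident_constraints(2)[OF gB B] .
  next
    case 3
    then have "{c \<in> constraints sig A. Mlab a c = l \<and> ideg sig A j (Inr c) = t} = {}"
      and "{c \<in> constraints sig B. Mlab b c = l \<and> ideg sig B j (Inr c) = t} = {}"
      using graph_incident_constraints(3)[OF gA A l] graph_incident_constraints(3)[OF gB B l]
      by blast+
    then show ?thesis by (simp only: card.empty)
  qed
qed

lemma frac_iso_graph_compatible_ideg:
  fixes sig :: "'r set" and P :: "'b \<Rightarrow> 'a \<Rightarrow> real"
  assumes A: "is_structure sig ar A" and B: "is_structure sig ar B"
    and gA: "is_graph sig ar E A" and gB: "is_graph sig ar E B"
    and dsP: "doubly_stochastic (univ B) (univ A) P"
    and PN: "\<And>b a. b \<in> univ B \<Longrightarrow> a \<in> univ A \<Longrightarrow>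
      (\<Sum>a'\<in>univ A. P b a' * adj E A a' a) = (\<Sum>b'\<in>univ B. adj E B b b' * P b' a)"
  shows "b \<in> univ B \<Longrightarrow> a \<in> univ A \<Longrightarrow> P b a > 0 \<Longrightarrow> ideg sig A k (Inl a) = ideg sig B k (Inl b)"
proof (induction k arbitrary: a b rule: less_induct)
  case (less k)
  show ?case
  proof (cases k)
    case (Suc j)
    have "ideg sig A (j - 1) (Inl a') = ideg sig B (j - 1) (Inl b')"
      if "b' \<in> univ B" "a' \<in> univ A" "P b' a' > 0" for a' b'
      using less.IH[of "j - 1"] Suc that by simp
    from frac_iso_graph_ideg_Suc_eq[OF A B gA gB dsP PN this less.prems] show ?thesis
      using Suc by simp
  qed simp
qed

lemma graph_card_constraint_class:
  assumes g: "is_graph sig ar E S" and S: "is_structure sig ar S"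
  shows "real (card {c \<in> constraints sig S. iterated_degree sig S (Inr c) = T}) =
    (\<Sum>u\<in>univ S. \<Sum>v\<in>univ S. adj E S u v *
      (if (\<lambda>j. edge_deg E j (iterated_degree sig S (Inl u) (j - 1))
                               (iterated_degree sig S (Inl v) (j - 1))) = T then 1 else 0))"
proof -
  let ?\<delta> = "iterated_degree sig S"
  let ?edge_class = "{p \<in> univ S \<times> univ S. [fst p, snd p] \<in> rels S E \<and>
    (\<lambda>j. edge_deg E j (?\<delta> (Inl (fst p)) (j - 1)) (?\<delta> (Inl (snd p)) (j - 1))) = T}"
  have edge: "?\<delta> (Inr (E, [u, v])) = (\<lambda>j. edge_deg E j (?\<delta> (Inl u) (j - 1)) (?\<delta> (Inl v) (j - 1)))"
    if "[u, v] \<in> rels S E" for u v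
    unfolding iterated_degree_def using ideg_edge[OF g S that] by simp
  have "{c \<in> constraints sig S. ?\<delta> (Inr c) = T} = (\<lambda>p. (E, [fst p, snd p])) ` ?edge_class"
  proof (intro equalityI subsetI)
    fix c assume "c \<in> {c \<in> constraints sig S. ?\<delta> (Inr c) = T}"
    then obtain u v where "c = (E, [u, v])" "[u, v] \<in> rels S E" "u \<in> univ S" "v \<in> univ S"
      "?\<delta> (Inr c) = T"
      using graph_constraintE[OF g S] by blast
    then show "c \<in> (\<lambda>p. (E, [fst p, snd p])) ` ?edge_class"
      using edge by (auto intro!: image_eqI[where x = "(u, v)"])
  qed (use edge graph_edge_in_constraints[OF g] in auto)
  moreover have "inj_on (\<lambda>p. (E, [fst p, snd p])) ?edge_class"
    by (rule inj_onI) (simp add: prod_eq_iff)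
  ultimately have "real (card {c \<in> constraints sig S. ?\<delta> (Inr c) = T}) = real (card ?edge_class)"
    by (simp add: card_image)
  also have "\<dots> = (\<Sum>p\<in>univ S \<times> univ S. if [fst p, snd p] \<in> rels S E \<and>
      (\<lambda>j. edge_deg E j (?\<delta> (Inl (fst p)) (j - 1)) (?\<delta> (Inl (snd p)) (j - 1))) = T then 1 else 0)"
    using finite_univ[OF S] by (simp add: card_eq_sum_indicator)
  also have "\<dots> = (\<Sum>u\<in>univ S. \<Sum>v\<in>univ S. adj E S u v *
      (if (\<lambda>j. edge_deg E j (?\<delta> (Inl u) (j - 1)) (?\<delta> (Inl v) (j - 1))) = T then 1 else 0))"
    unfolding sum.cartesian_product by (intro sum.cong) (auto simp: adj_def)
  finally show ?thesis .
qed

lemma frac_iso_graph_imp_iterated_degree_sequence_eq: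
  assumes A: "is_structure sig ar A" and B: "is_structure sig ar B"
    and gA: "is_graph sig ar E A" and gB: "is_graph sig ar E B"
    and "frac_iso_graph E A B"
  shows "iterated_degree_sequence sig A = iterated_degree_sequence sig B"
proof (rule multiset_eqI)
  obtain P where dsP: "doubly_stochastic (univ B) (univ A) P"
    and PN: "\<forall>b\<in>univ B. \<forall>a\<in>univ A.
      (\<Sum>a'\<in>univ A. P b a' * adj E A a' a) = (\<Sum>b'\<in>univ B. adj E B b b' * P b' a)"
    using assms(5) unfolding frac_iso_graph_def by blast
  have compat: "iterated_degree sig A (Inl a) = iterated_degree sig B (Inl b)"
    if "b \<in> univ B" "a \<in> univ A" "P b a > 0" for a b
    unfolding iterated_degree_def
    using frac_iso_graph_compatible_ideg[OF A B gA gB dsP] PN that by blast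
  fix T
  have "card {a \<in> univ A. iterated_degree sig A (Inl a) = T} =
      card {b \<in> univ B. iterated_degree sig B (Inl b) = T}"
    by (rule doubly_stochastic_card_eq[OF finite_univ[OF A] finite_univ[OF B] dsP compat])
  moreover have "real (card {c \<in> constraints sig A. iterated_degree sig A (Inr c) = T}) =
      real (card {c \<in> constraints sig B. iterated_degree sig B (Inr c) = T})"
    unfolding graph_card_constraint_class[OF gA A] graph_card_constraint_class[OF gB B]
    using PN by (intro doubly_stochastic_bilinear_eq[OF dsP _ compat]) auto
  ultimately show
    "count (iterated_degree_sequence sig A) T = count (iterated_degree_sequence sig B) T"
    by (simp add: count_iterated_degree_sequence[OF A] count_iterated_degree_sequence[OF B])
qed

theorem theorem3p2:
  fixes sig :: "'r set" and ar :: "'r \<Rightarrow> nat"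
    and A :: "('r, 'a) struc" and B :: "('r, 'b) struc"
  assumes "is_structure sig ar A" and "is_structure sig ar B"
  shows "(frac_iso sig ar A B \<longleftrightarrow>
            iterated_degree_sequence sig A = iterated_degree_sequence sig B) \<and>
         (iterated_degree_sequence sig A = iterated_degree_sequence sig B \<longleftrightarrow>
            common_equitable_partition sig ar A B) \<and>
         (\<forall>E. is_graph sig ar E A \<longrightarrow> is_graph sig ar E B \<longrightarrow>
            (frac_iso_graph E A B \<longleftrightarrow> frac_iso sig ar A B))"
proof -
  note A = assms(1) and B = assms(2)
  have "frac_iso sig ar A B \<Longrightarrow> iterated_degree_sequence sig A = iterated_degree_sequence sig B"
    by (rule frac_iso_imp_iterated_degree_sequence_eq[OF A B])
  moreover have "iterated_degree_sequence sig A = iterated_degree_sequence sig B \<Longrightarrow>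
      common_equitable_partition sig ar A B"
    by (rule iterated_degree_sequence_eq_imp_common_equitable_partition[OF A B])
  moreover have "common_equitable_partition sig ar A B \<Longrightarrow> frac_iso sig ar A B"
    by (rule common_equitable_partition_imp_frac_iso[OF A B])
  moreover have "frac_iso_graph E A B \<longleftrightarrow> frac_iso sig ar A B"
    if "is_graph sig ar E A" "is_graph sig ar E B" for E
    using frac_iso_imp_frac_iso_graph[OF A B that]
      frac_iso_graph_imp_iterated_degree_sequence_eq[OF A B that]
      calculation by blast
  ultimately show ?thesis by blast
qed

end
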